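(* Let $\mu$ be a finite positive Borel measure on $\mathbb{D}$ and $\Psi_1,\Psi_2$ Orlicz functions. Suppose that for some constant $A>0$ there is $0<h_A\le1/2$ such that $$K_{\mu,2}(h)\le\frac{1/h^2}{\Psi_2\big[A\,\Psi_1^{-1}(1/h^2)\big]}\quad\text{for }0<h<h_A.$$ Then for every $f\in\mathfrak{B}^{\Psi_1}$ with $\|f\|_{\mathfrak{B}^{\Psi_1}}\le1$ and every Borel set $E\subseteq\mathbb{D}$, with $x_A=(A/8)\,\Psi_1^{-1}(4/h_A^2)$, $$\int_E\Psi_2(A|f|/64)\,d\mu\le\mu(E)\,\Psi_2(x_A)+\frac18\int_{\mathbb{D}}\Psi_1(\Lambda_f)\,d\mathcal{A}.$$
   Context: $\mathbb{D}$ is the open unit disk, $\mathbb{T}$ the unit circle, $\mathcal{A}$ the normalized area measure $dx\,dy/\pi$. An Orlicz function is a nonnegative increasing convex $\Psi\colon[0,\infty)\to[0,\infty)$ with $\Psi(0)=0$, $\Psi(x)>0$ for $x>0$, $\Psi(\infty)=\infty$. $\mathfrak{B}^{\Psi}$ is the space of analytic $f$ on $\mathbb{D}$ with Luxemburg norm $\inf\{C>0:\int_{\mathbb{D}}\Psi(|f|/C)\,d\mathcal{A}\le1\}$ finite. For $\xi\in\mathbb{T}$, $0<h\le1$: $W(\xi,h)=\{z\in\mathbb{D}:|z|\ge1-h,\ |\arg(z\bar\xi)|\le\pi h\}$, $\rho_\mu(h)=\sup_{\xi}\mu(W(\xi,h))$, $K_{\mu,2}(h)=\sup_{0<t<h}\rho_\mu(t)/t^2$.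 Hastings–Luecking sets: for $k=2^n+j-1$, $n\ge0$, $0\le j\le2^n-1$, $\Delta_k=\{z\in\mathbb{D}:1-2^{-n}\le|z|<1-2^{-n-1},\ (2j-1)\pi/2^n\le\arg z<(2j+1)\pi/2^n\}$; $\Lambda_f=\sum_{k\ge0}(\sup_{\Delta_k}|f|)\mathbf{1}_{\Delta_k}$. *)

theory Defs
  imports "HOL-Analysis.Analysis"
begin

text \<open>Orlicz function: nonnegative, increasing, convex on [0,oo), vanishing only at 0,
  tending to infinity. Only its values on [0,oo) matter.\<close>
definition orlicz :: "(real \<Rightarrow> real) \<Rightarrow> bool" where
  "orlicz \<Psi> \<longleftrightarrow> (\<forall>x\<ge>0. \<Psi> x \<ge> 0) \<and> mono_on {0..} \<Psi> \<and> convex_on {0..} \<Psi> \<and>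
     \<Psi> 0 = 0 \<and> (\<forall>x>0. \<Psi> x > 0) \<and> filterlim \<Psi> at_top at_top"

text \<open>Inverse of an Orlicz function (a bijection of [0,oo) onto itself).\<close>
definition orlicz_inv :: "(real \<Rightarrow> real) \<Rightarrow> real \<Rightarrow> real" where
  "orlicz_inv \<Psi> y = (THE x. x \<ge> 0 \<and> \<Psi> x = y)"

definition unit_disc :: "complex set" where
  "unit_disc = ball 0 1"

definition area_D :: "complex measure" where
  "area_D = density (restrict_space lborel unit_disc) (\<lambda>_. ennreal (1 / pi))"

definition orlicz_modular :: "(real \<Rightarrow> real) \<Rightarrow> (complex \<Rightarrow> complex) \<Rightarrow> real \<Rightarrow> ennreal" where
  "orlicz_modular \<Psi> f C = (\<integral>\<^sup>+ z. ennreal (\<Psi> (norm (f z) / C)) \<partial>area_D)"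

definition bergman_orlicz :: "(real \<Rightarrow> real) \<Rightarrow> (complex \<Rightarrow> complex) set" where
  "bergman_orlicz \<Psi> = {f. f holomorphic_on unit_disc \<and> (\<exists>C>0. orlicz_modular \<Psi> f C \<le> 1)}"

definition lux_norm :: "(real \<Rightarrow> real) \<Rightarrow> (complex \<Rightarrow> complex) \<Rightarrow> real" where
  "lux_norm \<Psi> f = Inf {C. C > 0 \<and> orlicz_modular \<Psi> f C \<le> 1}"

definition carleson_window :: "complex \<Rightarrow> real \<Rightarrow> complex set" where
  "carleson_window \<xi> h = {z. norm z < 1 \<and> norm z \<ge> 1 - h \<and> \<bar>Arg (z * cnj \<xi>)\<bar> \<le> pi * h}"

definition rho_mu :: "complex measure \<Rightarrow> real \<Rightarrow> real" where
  "rho_mu \<mu> h = (SUP \<xi>\<in>sphere 0 1. measure \<mu> (carleson_window \<xi> h))"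

definition K_mu2 :: "complex measure \<Rightarrow> real \<Rightarrow> ereal" where
  "K_mu2 \<mu> h = (SUP t\<in>{0<..<h}. ereal (rho_mu \<mu> t / t\<^sup>2))"

definition HL_box :: "nat \<Rightarrow> nat \<Rightarrow> complex set" where
  "HL_box n j = {z. 1 - 1 / 2 ^ n \<le> norm z \<and> norm z < 1 - 1 / 2 ^ (n + 1) \<and>
      (\<exists>m::int. (2 * real j - 1) * pi / 2 ^ n \<le> Arg z + 2 * pi * m \<and>
                Arg z + 2 * pi * m < (2 * real j + 1) * pi / 2 ^ n)}"

definition HL_set :: "nat \<Rightarrow> complex set" where
  "HL_set k = \<Union>{HL_box n j | n j. j \<le> 2 ^ n - 1 \<and> k = 2 ^ n + j - 1}"

definition Lambda_f :: "(complex \<Rightarrow> complex) \<Rightarrow> complex \<Rightarrow> real" where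
  "Lambda_f f z = (\<Sum>k. (SUP w\<in>HL_set k. norm (f w)) * indicator (HL_set k) z)"

end

theory Submission
  imports Defs "HOL-Complex_Analysis.Cauchy_Integral_Formula" "HOL-Probability.Characteristic_Functions"
begin

text \<open>Since \<open>\<Psi>\<^sub>1 (\<bar>f\<bar>)\<close> is subharmonic, \<open>\<parallel>f\<parallel> \<le> 1\<close> gives \<open>\<Psi>\<^sub>1 (\<bar>f\<bar>) \<le> 4 \<cdot> 4\<^sup>n\<close> on every
  Hastings--Luecking box of generation \<open>n\<close>. On a box where \<open>A \<bar>f\<bar> / 64\<close> exceeds \<open>x\<^sub>A\<close>,
  the supremum \<open>s\<close> of \<open>\<bar>f\<bar>\<close> satisfies \<open>\<Psi>\<^sub>1 s > 32 / h\<^sub>A\<^sup>2\<close>, so the Carleson hypothesis applies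
  at the scale \<open>h = \<surd>(32 / \<Psi>\<^sub>1 s) \<in> (2\<^sup>-\<^sup>n, h\<^sub>A)\<close> and bounds \<open>\<Psi>\<^sub>2 (A s / 64)\<close> times the
  \<open>\<mu>\<close>-measure of the Carleson window over the box by \<open>\<Psi>\<^sub>1 s / 8\<close> times the area of a rectangle
  inside the box. The boxes are disjoint and \<open>\<Lambda>\<^sub>f = s\<close> on each of them, so summing gives the
  integral of \<open>\<Psi>\<^sub>1 (\<Lambda>\<^sub>f)\<close>; off these boxes the integrand is at most \<open>\<Psi>\<^sub>2 x\<^sub>A\<close>.\<close>

section \<open>Lebesgue measure on the plane\<close>

lemma borel_measurable_Complex [measurable]:
  assumes [measurable]: "f \<in> borel_measurable M" "g \<in> borel_measurable M"
  shows "(\<lambda>x. Complex (f x) (g x)) \<in> borel_measurable M"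
proof -
  have "(\<lambda>x. Complex (f x) (g x)) = (\<lambda>x. complex_of_real (f x) + \<i> * complex_of_real (g x))"
    by (auto simp: complex_eq_iff)
  then show ?thesis by simp
qed

lemma distr_lborel_pair_Complex:
  "distr (lborel \<Otimes>\<^sub>M lborel) borel (\<lambda>p. Complex (fst p) (snd p)) = (lborel :: complex measure)"
proof (rule lborel_eqI[symmetric])
  fix l u :: complex
  assume le: "\<And>b. b \<in> Basis \<Longrightarrow> l \<bullet> b \<le> u \<bullet> b"
  have le1: "Re l \<le> Re u" "Im l \<le> Im u"
    using le[of 1] le[of \<i>] by (auto simp: inner_complex_def Basis_complex_def)
  have pre: "(\<lambda>p. Complex (fst p) (snd p)) -` box l u \<inter> space (lborel \<Otimes>\<^sub>M lborel)
      = {Re l<..<Re u} \<times> {Im l<..<Im u}"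
    by (auto simp: box_def Basis_complex_def inner_complex_def space_pair_measure)
  have "emeasure (distr (lborel \<Otimes>\<^sub>M lborel) borel (\<lambda>p. Complex (fst p) (snd p))) (box l u)
      = emeasure (lborel \<Otimes>\<^sub>M lborel) ({Re l<..<Re u} \<times> {Im l<..<Im u})"
    by (subst emeasure_distr) (auto simp: pre)
  also have "\<dots> = ennreal ((Re u - Re l) * (Im u - Im l))"
    using le1 by (simp add: lborel.emeasure_pair_measure_Times ennreal_mult)
  also have "(Re u - Re l) * (Im u - Im l) = prod ((\<bullet>) (u - l)) Basis"
    by (simp add: Basis_complex_def inner_complex_def)
  finally show "emeasure (distr (lborel \<Otimes>\<^sub>M lborel) borel (\<lambda>p. Complex (fst p) (snd p))) (box l u)
      = ennreal (prod ((\<bullet>) (u - l)) Basis)" .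
qed simp

lemma nn_integral_lborel_complex:
  assumes [measurable]: "h \<in> borel_measurable borel"
  shows "(\<integral>\<^sup>+z. h z \<partial>(lborel::complex measure)) = (\<integral>\<^sup>+x. \<integral>\<^sup>+y. h (Complex x y) \<partial>lborel \<partial>lborel)"
proof -
  have "(\<integral>\<^sup>+z. h z \<partial>(lborel::complex measure))
      = integral\<^sup>N (distr (lborel \<Otimes>\<^sub>M lborel) borel (\<lambda>p. Complex (fst p) (snd p))) h"
    by (simp add: distr_lborel_pair_Complex)
  also have "\<dots> = (\<integral>\<^sup>+p. h (Complex (fst p) (snd p)) \<partial>(lborel \<Otimes>\<^sub>M lborel))"
    by (rule nn_integral_distr) auto
  also have "\<dots> = (\<integral>\<^sup>+x. \<integral>\<^sup>+y. h (Complex x y) \<partial>lborel \<partial>lborel)"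
    using lborel.nn_integral_fst[of "\<lambda>p. h (Complex (fst p) (snd p))"] by simp
  finally show ?thesis .
qed

lemma nn_integral_lborel_translate:
  fixes g :: "'a::euclidean_space \<Rightarrow> ennreal"
  assumes [measurable]: "g \<in> borel_measurable borel"
  shows "(\<integral>\<^sup>+x. g (a + x) \<partial>lborel) = (\<integral>\<^sup>+x. g x \<partial>lborel)"
proof -
  have "(\<integral>\<^sup>+x. g x \<partial>lborel) = integral\<^sup>N (distr lborel borel ((+) a)) g"
    by (simp add: lborel_distr_plus)
  also have "\<dots> = (\<integral>\<^sup>+x. g (a + x) \<partial>lborel)"
    by (rule nn_integral_distr) auto
  finally show ?thesis by simp
qed

definition shear_Re :: "real \<Rightarrow> complex \<Rightarrow> complex" where
  "shear_Re c z = Complex (Re z + c * Im z) (Im z)"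

definition shear_Im :: "real \<Rightarrow> complex \<Rightarrow> complex" where
  "shear_Im c z = Complex (Re z) (Im z + c * Re z)"

lemma borel_measurable_shear [measurable]:
  "shear_Re c \<in> borel_measurable borel" "shear_Im c \<in> borel_measurable borel"
  unfolding shear_Re_def shear_Im_def by measurable

lemma nn_integral_lborel_shear_Re:
  assumes [measurable]: "h \<in> borel_measurable borel"
  shows "(\<integral>\<^sup>+z. h (shear_Re c z) \<partial>lborel) = (\<integral>\<^sup>+z. h z \<partial>lborel)"
proof -
  have "(\<integral>\<^sup>+z. h (shear_Re c z) \<partial>lborel) = (\<integral>\<^sup>+x. \<integral>\<^sup>+y. h (Complex (x + c * y) y) \<partial>lborel \<partial>lborel)"
    by (subst nn_integral_lborel_complex) (auto simp: shear_Re_def)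
  also have "\<dots> = (\<integral>\<^sup>+y. \<integral>\<^sup>+x. h (Complex (x + c * y) y) \<partial>lborel \<partial>lborel)"
    by (rule lborel_pair.Fubini'[symmetric]) simp
  also have "\<dots> = (\<integral>\<^sup>+y. \<integral>\<^sup>+x. h (Complex x y) \<partial>lborel \<partial>lborel)"
  proof (rule nn_integral_cong)
    fix y
    show "(\<integral>\<^sup>+x. h (Complex (x + c * y) y) \<partial>lborel) = (\<integral>\<^sup>+x. h (Complex x y) \<partial>lborel)"
      using nn_integral_lborel_translate[of "\<lambda>x. h (Complex x y)" "c * y"] by (simp add: add.commute)
  qed
  also have "\<dots> = (\<integral>\<^sup>+x. \<integral>\<^sup>+y. h (Complex x y) \<partial>lborel \<partial>lborel)"
    by (rule lborel_pair.Fubini') simp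
  also have "\<dots> = (\<integral>\<^sup>+z. h z \<partial>lborel)"
    by (subst nn_integral_lborel_complex) auto
  finally show ?thesis .
qed

lemma nn_integral_lborel_shear_Im:
  assumes [measurable]: "h \<in> borel_measurable borel"
  shows "(\<integral>\<^sup>+z. h (shear_Im c z) \<partial>lborel) = (\<integral>\<^sup>+z. h z \<partial>lborel)"
proof -
  have "(\<integral>\<^sup>+z. h (shear_Im c z) \<partial>lborel) = (\<integral>\<^sup>+x. \<integral>\<^sup>+y. h (Complex x (y + c * x)) \<partial>lborel \<partial>lborel)"
    by (subst nn_integral_lborel_complex) (auto simp: shear_Im_def)
  also have "\<dots> = (\<integral>\<^sup>+x. \<integral>\<^sup>+y. h (Complex x y) \<partial>lborel \<partial>lborel)"
  proof (rule nn_integral_cong)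
    fix x
    show "(\<integral>\<^sup>+y. h (Complex x (y + c * x)) \<partial>lborel) = (\<integral>\<^sup>+y. h (Complex x y) \<partial>lborel)"
      using nn_integral_lborel_translate[of "\<lambda>y. h (Complex x y)" "c * x"] by (simp add: add.commute)
  qed
  also have "\<dots> = (\<integral>\<^sup>+z. h z \<partial>lborel)"
    by (subst nn_integral_lborel_complex) auto
  finally show ?thesis .
qed

text \<open>A rotation by \<open>\<omega> \<noteq> -1\<close> factors into three shears (Paeth's decomposition); each shear
  preserves Lebesgue measure by Fubini and translation invariance.\<close>
lemma rotation_eq_shears:
  assumes "norm \<omega> = 1" "\<omega> \<noteq> -1"
  defines "c \<equiv> - Im \<omega> / (1 + Re \<omega>)"
  shows "\<omega> * z = shear_Re c (shear_Im (Im \<omega>) (shear_Re c z))"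
proof -
  define a b where "a = Re \<omega>" and "b = Im \<omega>"
  have ab: "a\<^sup>2 + b\<^sup>2 = 1" using assms(1) unfolding a_def b_def cmod_def by simp
  have a1: "1 + a \<noteq> 0"
  proof
    assume "1 + a = 0"
    then have "a = -1" by simp
    with ab have "b = 0" by simp
    with \<open>a = -1\<close> have "\<omega> = -1" unfolding a_def b_def by (simp add: complex_eq_iff)
    with assms(2) show False by simp
  qed
  have bc: "b * c = a - 1"
  proof -
    have "b * c = - (b\<^sup>2) / (1 + a)" by (simp add: c_def a_def b_def power2_eq_square)
    also have "b\<^sup>2 = (1 - a) * (1 + a)" using ab by (simp add: algebra_simps power2_eq_square)
    finally show ?thesis using a1 by simp
  qed
  have c2: "c * (2 + b * c) = - b"
    using a1 bc by (simp add: c_def a_def b_def)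
  have "Re (shear_Re c (shear_Im b (shear_Re c z))) = Re z * (1 + b * c) + Im z * (c * (2 + b * c))"
    by (simp add: shear_Re_def shear_Im_def algebra_simps)
  also have "\<dots> = Re z * a - Im z * b" by (simp only: c2) (simp add: bc)
  finally have re: "Re (shear_Re c (shear_Im b (shear_Re c z))) = Re z * a - Im z * b" .
  have "Im (shear_Re c (shear_Im b (shear_Re c z))) = b * Re z + Im z * (1 + b * c)"
    by (simp add: shear_Re_def shear_Im_def algebra_simps)
  also have "\<dots> = b * Re z + Im z * a" unfolding bc by simp
  finally have im: "Im (shear_Re c (shear_Im b (shear_Re c z))) = b * Re z + Im z * a" .
  show ?thesis
    using re im by (simp add: complex_eq_iff a_def b_def algebra_simps)
qed

lemma nn_integral_lborel_rotate:
  fixes h :: "complex \<Rightarrow> ennreal"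
  assumes [measurable]: "h \<in> borel_measurable borel" and "norm \<omega> = 1"
  shows "(\<integral>\<^sup>+z. h (\<omega> * z) \<partial>lborel) = (\<integral>\<^sup>+z. h z \<partial>lborel)"
proof -
  have rot: "(\<integral>\<^sup>+z. g (\<omega> * z) \<partial>lborel) = (\<integral>\<^sup>+z. g z \<partial>lborel)"
    if [measurable]: "g \<in> borel_measurable borel" and "norm \<omega> = 1" "\<omega> \<noteq> -1" for g and \<omega> :: complex
  proof -
    define c where "c = - Im \<omega> / (1 + Re \<omega>)"
    have "(\<integral>\<^sup>+z. g (\<omega> * z) \<partial>lborel) = (\<integral>\<^sup>+z. g (shear_Re c (shear_Im (Im \<omega>) (shear_Re c z))) \<partial>lborel)"
      using rotation_eq_shears[OF that(2,3)] by (simp add: c_def)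
    also have "\<dots> = (\<integral>\<^sup>+z. g (shear_Re c (shear_Im (Im \<omega>) z)) \<partial>lborel)"
      by (rule nn_integral_lborel_shear_Re) measurable
    also have "\<dots> = (\<integral>\<^sup>+z. g (shear_Re c z) \<partial>lborel)"
      by (rule nn_integral_lborel_shear_Im) measurable
    also have "\<dots> = (\<integral>\<^sup>+z. g z \<partial>lborel)"
      by (rule nn_integral_lborel_shear_Re) measurable
    finally show ?thesis .
  qed
  show ?thesis
  proof (cases "\<omega> = -1")
    case True
    have i: "norm \<i> = 1" "\<i> \<noteq> -1" by (auto simp: complex_eq_iff)
    have "(\<integral>\<^sup>+z. h (\<omega> * z) \<partial>lborel) = (\<integral>\<^sup>+z. (\<lambda>u. h (\<i> * u)) (\<i> * z) \<partial>lborel)"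
      by (simp add: True)
    also have "\<dots> = (\<integral>\<^sup>+z. h (\<i> * z) \<partial>lborel)"
      by (rule rot[OF _ i]) measurable
    also have "\<dots> = (\<integral>\<^sup>+z. h z \<partial>lborel)"
      by (rule rot[OF _ i]) measurable
    finally show ?thesis .
  qed (use assms rot in auto)
qed

lemma emeasure_lborel_rotate_image:
  fixes S :: "complex set"
  assumes [measurable]: "S \<in> sets borel" and \<omega>: "norm \<omega> = 1"
  shows "emeasure lborel ((*) \<omega> ` S) = emeasure lborel S"
proof -
  have unit: "cnj \<omega> * \<omega> = 1" "\<omega> * cnj \<omega> = 1"
    using \<omega> complex_norm_square[of \<omega>] by (simp_all add: mult.commute)
  have img: "(*) \<omega> ` S = (*) (cnj \<omega>) -` S"
  proof (intro set_eqI iffI)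
    fix x assume "x \<in> (*) (cnj \<omega>) -` S"
    then show "x \<in> (*) \<omega> ` S"
      using unit by (intro image_eqI[of _ _ "cnj \<omega> * x"]) (simp_all add: mult.assoc[symmetric])
  qed (use unit in \<open>auto simp: mult.assoc[symmetric]\<close>)
  have "(*) (cnj \<omega>) \<in> borel_measurable borel" by simp
  from measurable_sets[OF this assms(1)] have [measurable]: "(*) \<omega> ` S \<in> sets borel"
    by (simp add: img)
  have ind: "indicator ((*) \<omega> ` S) (\<omega> * z) = (indicator S z :: ennreal)" for z
    using \<omega> by (auto simp: indicator_def)
  have "emeasure lborel ((*) \<omega> ` S) = (\<integral>\<^sup>+z. indicator ((*) \<omega> ` S) (\<omega> * z) \<partial>lborel)"
    by (simp add: nn_integral_lborel_rotate[OF _ \<omega>])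
  also have "\<dots> = emeasure lborel S" unfolding ind by simp
  finally show ?thesis .
qed

section \<open>Orlicz functions\<close>

lemma orlicz_nonneg: "orlicz \<Psi> \<Longrightarrow> 0 \<le> x \<Longrightarrow> 0 \<le> \<Psi> x"
  by (simp add: orlicz_def)

lemma orlicz_0: "orlicz \<Psi> \<Longrightarrow> \<Psi> 0 = 0"
  by (simp add: orlicz_def)

lemma orlicz_pos: "orlicz \<Psi> \<Longrightarrow> 0 < x \<Longrightarrow> 0 < \<Psi> x"
  by (simp add: orlicz_def)

lemma orlicz_mono: "orlicz \<Psi> \<Longrightarrow> 0 \<le> x \<Longrightarrow> x \<le> y \<Longrightarrow> \<Psi> x \<le> \<Psi> y"
  unfolding orlicz_def mono_on_def by (metis atLeast_iff order_trans)

lemma orlicz_convex: "orlicz \<Psi> \<Longrightarrow> convex_on {0..} \<Psi>"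
  by (simp add: orlicz_def)

lemma orlicz_mult_le:
  assumes "orlicz \<Psi>" "0 \<le> c" "c \<le> 1" "0 \<le> x"
  shows "\<Psi> (c * x) \<le> c * \<Psi> x"
proof -
  have "\<Psi> ((1 - c) *\<^sub>R 0 + c *\<^sub>R x) \<le> (1 - c) * \<Psi> 0 + c * \<Psi> x"
    using convex_onD[OF orlicz_convex[OF assms(1)], of c 0 x] assms by auto
  then show ?thesis using orlicz_0[OF assms(1)] by simp
qed

lemma orlicz_less:
  assumes "orlicz \<Psi>" "0 \<le> x" "x < y"
  shows "\<Psi> x < \<Psi> y"
proof (cases "x = 0")
  case True
  then show ?thesis using assms orlicz_pos orlicz_0 by fastforce
next
  case False
  have "\<Psi> ((x / y) * y) \<le> (x / y) * \<Psi> y"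
    using assms by (intro orlicz_mult_le) auto
  moreover have "(x / y) * \<Psi> y < \<Psi> y"
    using assms False orlicz_pos[OF assms(1), of y] by (simp add: field_simps)
  ultimately show ?thesis using assms by simp
qed

lemma orlicz_le_iff: "orlicz \<Psi> \<Longrightarrow> 0 \<le> x \<Longrightarrow> 0 \<le> y \<Longrightarrow> \<Psi> x \<le> \<Psi> y \<longleftrightarrow> x \<le> y"
  using orlicz_mono[of \<Psi> x y] orlicz_less[of \<Psi> y x] by (cases "x \<le> y") auto

lemma orlicz_continuous:
  assumes "orlicz \<Psi>"
  shows "continuous_on {0..} \<Psi>"
  unfolding continuous_on_eq_continuous_within
proof
  fix x :: real assume x: "x \<in> {0..}"
  show "continuous (at x within {0..}) \<Psi>"
  proof (cases "x = 0")
    case False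
    have "continuous_on {0<..} \<Psi>"
      by (rule convex_on_continuous) (auto intro: convex_on_subset[OF orlicz_convex[OF assms]])
    with False x show ?thesis
      by (simp add: continuous_on_eq_continuous_at continuous_at_imp_continuous_within)
  next
    case True
    have near: "\<forall>\<^sub>F y in at 0 within {0..}. y \<in> {0..1::real}"
      by (simp add: eventually_at_le) (use zero_less_one in blast)
    have "(\<Psi> \<longlongrightarrow> 0) (at 0 within {0..})"
    proof (rule tendsto_sandwich[of "\<lambda>_. 0" _ _ "\<lambda>y. y * \<Psi> 1"])
      show "\<forall>\<^sub>F y in at 0 within {0..}. 0 \<le> \<Psi> y"
        using near by eventually_elim (simp add: orlicz_nonneg[OF assms])
      show "\<forall>\<^sub>F y in at 0 within {0..}. \<Psi> y \<le> y * \<Psi> 1"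
        using near by eventually_elim (use orlicz_mult_le[OF assms, of _ 1] in auto)
      show "((\<lambda>y. y * \<Psi> 1) \<longlongrightarrow> 0) (at 0 within {0..})"
        by (auto intro!: tendsto_eq_intros)
    qed simp
    then show ?thesis
      using True by (simp add: continuous_within orlicz_0[OF assms])
  qed
qed

lemma
  assumes "orlicz \<Psi>" "0 \<le> y"
  shows orlicz_inv_nonneg: "0 \<le> orlicz_inv \<Psi> y"
    and orlicz_orlicz_inv: "\<Psi> (orlicz_inv \<Psi> y) = y"
proof -
  have "filterlim \<Psi> at_top at_top" using assms(1) by (simp add: orlicz_def)
  then obtain b0 where b0: "\<And>x. x \<ge> b0 \<Longrightarrow> y \<le> \<Psi> x"
    by (auto simp: filterlim_at_top eventually_at_top_linorder)
  define b where "b = max b0 0"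
  have "y \<le> \<Psi> b" "0 \<le> b" using b0 by (auto simp: b_def)
  moreover have "continuous_on {0..b} \<Psi>"
    by (rule continuous_on_subset[OF orlicz_continuous[OF assms(1)]]) auto
  ultimately obtain x where x: "0 \<le> x" "\<Psi> x = y"
    using IVT'[of \<Psi> 0 y b] orlicz_0[OF assms(1)] assms(2) by auto
  have "orlicz_inv \<Psi> y = x"
    unfolding orlicz_inv_def
  proof (rule the_equality)
    show "\<And>x'. 0 \<le> x' \<and> \<Psi> x' = y \<Longrightarrow> x' = x"
      using orlicz_le_iff[OF assms(1)] x by (metis order_antisym order_refl)
  qed (use x in simp)
  then show "0 \<le> orlicz_inv \<Psi> y" "\<Psi> (orlicz_inv \<Psi> y) = y" using x by auto
qed

lemma orlicz_le_inv_iff: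
  assumes "orlicz \<Psi>" "0 \<le> x" "0 \<le> y"
  shows "\<Psi> x \<le> y \<longleftrightarrow> x \<le> orlicz_inv \<Psi> y"
  using orlicz_le_iff[OF assms(1,2) orlicz_inv_nonneg[OF assms(1,3)]] orlicz_orlicz_inv[OF assms(1,3)]
  by simp

text \<open>Extending \<open>\<Psi>\<close> by \<open>\<Psi> 0\<close> on the negative axis keeps it convex, as Jensen's inequality
  in the library requires a convex function on an open interval.\<close>
lemma orlicz_convex_on_UNIV:
  assumes "orlicz \<Psi>"
  shows "convex_on UNIV (\<lambda>x. \<Psi> (max x 0))"
proof (rule convex_onI)
  fix t x y :: real assume t: "0 < t" "t < 1"
  have "max ((1 - t) *\<^sub>R x + t *\<^sub>R y) 0 \<le> (1 - t) *\<^sub>R max x 0 + t *\<^sub>R max y 0"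
  proof -
    have "(1 - t) * x \<le> (1 - t) * max x 0" "t * y \<le> t * max y 0"
      using t by (simp_all add: mult_left_mono)
    moreover have "0 \<le> (1 - t) * max x 0 + t * max y 0" using t by simp
    ultimately show ?thesis by simp
  qed
  then have "\<Psi> (max ((1 - t) *\<^sub>R x + t *\<^sub>R y) 0) \<le> \<Psi> ((1 - t) *\<^sub>R max x 0 + t *\<^sub>R max y 0)"
    by (intro orlicz_mono[OF assms]) auto
  also have "\<dots> \<le> (1 - t) * \<Psi> (max x 0) + t * \<Psi> (max y 0)"
    using t by (intro convex_onD[OF orlicz_convex[OF assms]]) auto
  finally show "\<Psi> (max ((1 - t) *\<^sub>R x + t *\<^sub>R y) 0) \<le> (1 - t) * \<Psi> (max x 0) + t * \<Psi> (max y 0)" .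
qed simp

section \<open>The sub-mean value property\<close>

definition turn :: "real \<Rightarrow> complex" where
  "turn t = exp (2 * of_real pi * \<i> * of_real t)"

lemma norm_turn [simp]: "norm (turn t) = 1"
  unfolding turn_def by (simp add: norm_exp_eq_Re)

lemma continuous_on_turn [continuous_intros]: "continuous_on S turn"
  unfolding turn_def by (intro continuous_intros)

lemma borel_measurable_turn [measurable]: "turn \<in> borel_measurable borel"
  by (intro borel_measurable_continuous_onI continuous_on_turn)

lemma circle_mean:
  fixes G :: "complex \<Rightarrow> complex"
  assumes cont: "continuous_on (cball w \<rho>) G" and holo: "G holomorphic_on ball w \<rho>" and \<rho>: "0 < \<rho>"
  shows "((\<lambda>t. G (w + of_real \<rho> * turn t)) has_integral G w) {0..1}"
proof -
  have "((\<lambda>u. G u / (u - w)) has_contour_integral (2 * of_real pi * \<i> * G w)) (circlepath w \<rho>)"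
    by (rule Cauchy_integral_circlepath[OF cont holo]) (simp add: \<rho>)
  then have hi: "((\<lambda>t. G (circlepath w \<rho> t) / (circlepath w \<rho> t - w)
      * vector_derivative (circlepath w \<rho>) (at t within {0..1})) has_integral (2 * of_real pi * \<i> * G w)) {0..1}"
    by (simp add: has_contour_integral_def)
  have "((\<lambda>t. (2 * of_real pi * \<i>) * G (w + of_real \<rho> * turn t)) has_integral (2 * of_real pi * \<i> * G w)) {0..1}"
  proof (rule has_integral_eq[OF _ hi])
    fix t :: real assume t: "t \<in> {0..1}"
    have e0: "turn t \<noteq> 0" unfolding turn_def by simp
    have c: "circlepath w \<rho> t = w + of_real \<rho> * turn t" by (simp add: circlepath turn_def)
    have "vector_derivative (circlepath w \<rho>) (at t within {0..1}) = 2 * of_real pi * \<i> * of_real \<rho> * turn t"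
      using t by (simp add: vector_derivative_circlepath01 turn_def)
    then show "G (circlepath w \<rho> t) / (circlepath w \<rho> t - w) * vector_derivative (circlepath w \<rho>) (at t within {0..1})
        = (2 * of_real pi * \<i>) * G (w + of_real \<rho> * turn t)"
      unfolding c using e0 \<rho> by (simp add: field_simps)
  qed
  from has_integral_mult_right[OF this, of "inverse (2 * of_real pi * \<i>)"]
  show ?thesis by (simp add: field_simps)
qed

lemma holomorphic_circle_mean:
  fixes g :: "complex \<Rightarrow> complex"
  assumes holo: "g holomorphic_on S" and S: "cball w (norm v) \<subseteq> S"
  shows "((\<lambda>t. g (w + turn t * v)) has_integral g w) {0..1}"
proof (cases "v = 0")
  case True
  then show ?thesis using has_integral_const_real[of "g w" 0 1] by simp
next
  case False
  define \<rho> where "\<rho> = norm v"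
  have \<rho>: "0 < \<rho>" using False by (simp add: \<rho>_def)
  define \<omega> where "\<omega> = v / of_real \<rho>"
  have \<omega>: "norm \<omega> = 1" using \<rho> by (simp add: \<omega>_def norm_divide \<rho>_def)
  define A where "A = (\<lambda>u. w + \<omega> * (u - w))"
  have Ain: "A ` cball w \<rho> \<subseteq> S"
    using S by (auto simp: A_def dist_norm norm_mult \<omega> norm_minus_commute \<rho>_def)
  have "continuous_on (cball w \<rho>) (g \<circ> A)"
    using Ain unfolding A_def
    by (intro continuous_on_compose continuous_intros
        continuous_on_subset[OF holomorphic_on_imp_continuous_on[OF holo]])
  moreover have "(g \<circ> A) holomorphic_on ball w \<rho>"
  proof (rule holomorphic_on_compose_gen[OF _ holo])
    show "A holomorphic_on ball w \<rho>" unfolding A_def by (intro holomorphic_intros)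
    show "A ` ball w \<rho> \<subseteq> S" using Ain ball_subset_cball[of w \<rho>] by blast
  qed
  ultimately have "((\<lambda>t. (g \<circ> A) (w + of_real \<rho> * turn t)) has_integral (g \<circ> A) w) {0..1}"
    using \<rho> by (rule circle_mean)
  moreover have "w + \<omega> * (of_real \<rho> * turn t) = w + turn t * v" for t
    using \<rho> by (simp add: \<omega>_def)
  ultimately show ?thesis by (simp add: A_def)
qed

lemma orlicz_jensen_01:
  fixes X :: "real \<Rightarrow> real"
  assumes orl: "orlicz \<Psi>" and contX: "continuous_on {0..1} X" and X0: "\<And>t. 0 \<le> X t"
  shows "ennreal (\<Psi> (integral {0..1} X)) \<le> (\<integral>\<^sup>+t. ennreal (\<Psi> (X t)) * indicator {0..1} t \<partial>lborel)"
proof -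
  have contPX: "continuous_on {0..1} (\<lambda>t. \<Psi> (X t))"
    by (rule continuous_on_compose2[OF orlicz_continuous[OF orl] contX]) (auto simp: X0)
  define M where "M = restrict_space lborel {0..1::real}"
  have sM: "{0..1::real} \<inter> space lborel \<in> sets lborel" by simp
  interpret P: prob_space M
    by (rule prob_spaceI) (simp add: M_def emeasure_restrict_space space_restrict_space)
  have intX: "integrable M X"
    unfolding M_def integrable_restrict_space[OF sM]
    by (rule borel_integrable_compact) (auto intro: contX)
  have intPX: "integrable M (\<lambda>t. \<Psi> (X t))"
    unfolding M_def integrable_restrict_space[OF sM]
    by (rule borel_integrable_compact) (auto intro: contPX)
  have "integral {0..1} X = set_lebesgue_integral lborel {0..1} X"
    by (rule set_borel_integral_eq_integral(2)[symmetric])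
       (unfold set_integrable_def, rule borel_integrable_compact, auto intro: contX)
  also have "\<dots> = P.expectation X"
    unfolding M_def integral_restrict_space[OF sM] set_lebesgue_integral_def ..
  finally have eqX: "integral {0..1} X = P.expectation X" .
  have "\<Psi> (max (P.expectation X) 0) \<le> P.expectation (\<lambda>t. \<Psi> (max (X t) 0))"
    by (rule P.jensens_inequality[where I=UNIV, OF intX])
       (use intPX X0 orlicz_convex_on_UNIV[OF orl] in \<open>simp_all add: max_absorb1\<close>)
  then have "\<Psi> (integral {0..1} X) \<le> P.expectation (\<lambda>t. \<Psi> (X t))"
    using X0 eqX by (simp add: max_absorb1 integral_nonneg_AE)
  also have "ennreal (P.expectation (\<lambda>t. \<Psi> (X t))) = (\<integral>\<^sup>+t. ennreal (\<Psi> (X t)) \<partial>M)"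
    by (rule nn_integral_eq_integral[OF intPX, symmetric]) (simp add: orlicz_nonneg[OF orl X0])
  also have "\<dots> = (\<integral>\<^sup>+t. ennreal (\<Psi> (X t)) * indicator {0..1} t \<partial>lborel)"
    unfolding M_def nn_integral_restrict_space[OF sM] ..
  finally show ?thesis by (simp add: ennreal_leI)
qed

lemma orlicz_circle_mean_le:
  fixes g :: "complex \<Rightarrow> complex"
  assumes orl: "orlicz \<Psi>" and holo: "g holomorphic_on S" and S: "cball w (norm v) \<subseteq> S"
  shows "ennreal (\<Psi> (norm (g w)))
    \<le> (\<integral>\<^sup>+t. ennreal (\<Psi> (norm (g (w + turn t * v)))) * indicator {0..1} t \<partial>lborel)"
proof -
  define \<phi> where "\<phi> = (\<lambda>t. g (w + turn t * v))"
  have cont\<phi>: "continuous_on {0..1} \<phi>"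
    unfolding \<phi>_def using S
    by (intro continuous_on_compose2[OF holomorphic_on_imp_continuous_on[OF holo]] continuous_intros)
       (auto simp: dist_norm norm_mult)
  have "norm (g w) \<le> integral {0..1} (\<lambda>t. norm (\<phi> t))"
    using integral_norm_bound_integral[of \<phi> "{0..1}" "\<lambda>t. norm (\<phi> t)"]
      integral_unique[OF holomorphic_circle_mean[OF holo S]]
    by (auto simp: \<phi>_def[symmetric] intro: integrable_continuous_interval cont\<phi> continuous_intros)
  then have "ennreal (\<Psi> (norm (g w))) \<le> ennreal (\<Psi> (integral {0..1} (\<lambda>t. norm (\<phi> t))))"
    by (intro ennreal_leI orlicz_mono[OF orl]) auto
  also have "\<dots> \<le> (\<integral>\<^sup>+t. ennreal (\<Psi> (norm (\<phi> t))) * indicator {0..1} t \<partial>lborel)"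
    by (rule orlicz_jensen_01[OF orl]) (auto intro: continuous_intros cont\<phi>)
  finally show ?thesis by (simp add: \<phi>_def)
qed

lemma unit_disc_borel [measurable]: "unit_disc \<in> sets borel"
  by (simp add: unit_disc_def)

lemma nn_integral_area_D:
  assumes [measurable]: "g \<in> borel_measurable borel"
  shows "(\<integral>\<^sup>+z. g z \<partial>area_D) = ennreal (1 / pi) * (\<integral>\<^sup>+z. g z * indicator unit_disc z \<partial>lborel)"
proof -
  have sD: "unit_disc \<inter> space lborel \<in> sets lborel" by simp
  have "(\<integral>\<^sup>+z. g z \<partial>area_D) = (\<integral>\<^sup>+z. ennreal (1 / pi) * g z \<partial>restrict_space lborel unit_disc)"
    unfolding area_D_def by (rule nn_integral_density) (simp_all add: measurable_restrict_space1)
  also have "\<dots> = (\<integral>\<^sup>+z. ennreal (1 / pi) * (g z * indicator unit_disc z) \<partial>lborel)"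
    by (simp add: nn_integral_restrict_space[OF sD] mult.assoc)
  also have "\<dots> = ennreal (1 / pi) * (\<integral>\<^sup>+z. g z * indicator unit_disc z \<partial>lborel)"
    by (rule nn_integral_cmult) measurable
  finally show ?thesis .
qed

lemma sets_area_D: "S \<in> sets borel \<Longrightarrow> S \<subseteq> unit_disc \<Longrightarrow> S \<in> sets area_D"
  unfolding area_D_def unit_disc_def by (simp add: sets_restrict_space_iff)

lemma emeasure_area_D:
  assumes "S \<in> sets borel" "S \<subseteq> unit_disc"
  shows "emeasure area_D S = ennreal (1 / pi) * emeasure lborel S"
proof -
  have "(\<lambda>z. indicator S z * indicator unit_disc z) = (indicator S :: complex \<Rightarrow> ennreal)"
    using assms(2) by (auto simp: fun_eq_iff split: split_indicator)
  then show ?thesis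
    using sets_area_D[OF assms] nn_integral_area_D[of "indicator S"] assms(1) by simp
qed

lemma nn_integral_circle_average:
  fixes F :: "complex \<Rightarrow> ennreal"
  assumes [measurable]: "F \<in> borel_measurable borel"
  shows "(\<integral>\<^sup>+v. \<integral>\<^sup>+t. F (w + turn t * v) * indicator {0..1} t \<partial>lborel \<partial>lborel) = (\<integral>\<^sup>+z. F z \<partial>lborel)"
proof -
  have "(\<integral>\<^sup>+v. \<integral>\<^sup>+t. F (w + turn t * v) * indicator {0..1} t \<partial>lborel \<partial>(lborel :: complex measure))
      = (\<integral>\<^sup>+t. \<integral>\<^sup>+v. F (w + turn t * v) * indicator {0..1} t \<partial>lborel \<partial>lborel)"
    by (rule pair_sigma_finite.Fubini')
       (simp_all add: pair_sigma_finite_def lborel.sigma_finite_measure_axioms)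
  also have "\<dots> = (\<integral>\<^sup>+t. (\<integral>\<^sup>+v. F (w + turn t * v) \<partial>lborel) * indicator {0..1} t \<partial>lborel)"
    by (intro nn_integral_cong nn_integral_multc) measurable
  also have "\<dots> = (\<integral>\<^sup>+t. (\<integral>\<^sup>+z. F z \<partial>lborel) * indicator {0..1::real} t \<partial>lborel)"
  proof -
    have "(\<integral>\<^sup>+v. F (w + turn t * v) \<partial>lborel) = (\<integral>\<^sup>+v. F (w + v) \<partial>lborel)" for t
      by (rule nn_integral_lborel_rotate[of "\<lambda>v. F (w + v)"]) simp_all
    then show ?thesis by (simp add: nn_integral_lborel_translate)
  qed
  also have "\<dots> = (\<integral>\<^sup>+z. F z \<partial>lborel)"
    by (simp add: nn_integral_cmult_indicator)
  finally show ?thesis .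
qed

lemma nn_integral_ge_circle_means:
  fixes F :: "complex \<Rightarrow> ennreal"
  assumes [measurable]: "F \<in> borel_measurable borel" and r: "0 \<le> r"
    and mean: "\<And>v. v \<in> ball 0 r \<Longrightarrow> c \<le> (\<integral>\<^sup>+t. F (w + turn t * v) * indicator {0..1} t \<partial>lborel)"
  shows "ennreal (pi * r\<^sup>2) * c \<le> (\<integral>\<^sup>+z. F z \<partial>lborel)"
proof -
  have "ennreal (pi * r\<^sup>2) * c = (\<integral>\<^sup>+v. c * indicator (ball 0 r) v \<partial>(lborel :: complex measure))"
    using r by (simp add: nn_integral_cmult_indicator emeasure_ball unit_ball_vol_2 mult.commute)
  also have "\<dots> \<le> (\<integral>\<^sup>+v. \<integral>\<^sup>+t. F (w + turn t * v) * indicator {0..1} t \<partial>lborel \<partial>lborel)"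
    by (intro nn_integral_mono) (auto simp: mean split: split_indicator)
  also have "\<dots> = (\<integral>\<^sup>+z. F z \<partial>lborel)"
    by (rule nn_integral_circle_average) simp
  finally show ?thesis .
qed

text \<open>The area sub-mean value property of the subharmonic function \<open>\<Psi> (\<bar>f\<bar> / C)\<close>.\<close>
lemma orlicz_area_mean_le:
  assumes orl: "orlicz \<Psi>" and holo: "f holomorphic_on unit_disc"
    and r: "0 < r" "cball w r \<subseteq> unit_disc" and C: "0 < C"
  shows "ennreal (r\<^sup>2 * \<Psi> (norm (f w) / C)) \<le> orlicz_modular \<Psi> f C"
proof -
  define g where "g = (\<lambda>u. f u / of_real C)"
  have holo_g: "g holomorphic_on unit_disc"
    unfolding g_def using C by (intro holomorphic_intros holo) simp
  have ng: "norm (g u) = norm (f u) / C" for u using C by (simp add: g_def norm_divide)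
  have contPg: "continuous_on (cball w r) (\<lambda>u. \<Psi> (norm (g u)))"
    by (rule continuous_on_compose2[OF orlicz_continuous[OF orl]])
       (auto intro!: continuous_intros continuous_on_subset[OF holomorphic_on_imp_continuous_on[OF holo_g] r(2)])
  have [measurable]: "(\<lambda>u. indicator (cball w r) u *\<^sub>R \<Psi> (norm (g u))) \<in> borel_measurable borel"
    by (rule borel_measurable_continuous_on_indicator) (simp_all add: contPg)
  define F where "F = (\<lambda>u. ennreal (indicator (cball w r) u *\<^sub>R \<Psi> (norm (g u))))"
  have [measurable]: "F \<in> borel_measurable borel"
    unfolding F_def by measurable
  have mean: "ennreal (\<Psi> (norm (g w))) \<le> (\<integral>\<^sup>+t. F (w + turn t * v) * indicator {0..1} t \<partial>lborel)"
    if "v \<in> ball 0 r" for v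
  proof -
    have "cball w (norm v) \<subseteq> cball w r" using that by auto
    then have "ennreal (\<Psi> (norm (g w)))
        \<le> (\<integral>\<^sup>+t. ennreal (\<Psi> (norm (g (w + turn t * v)))) * indicator {0..1} t \<partial>lborel)"
      using orlicz_circle_mean_le[OF orl holo_g] r(2) by blast
    also have "\<dots> = (\<integral>\<^sup>+t. F (w + turn t * v) * indicator {0..1} t \<partial>lborel)"
      using that by (intro nn_integral_cong) (simp add: F_def dist_norm norm_mult)
    finally show ?thesis .
  qed
  have "ennreal (pi * r\<^sup>2) * ennreal (\<Psi> (norm (g w))) \<le> (\<integral>\<^sup>+z. F z \<partial>lborel)"
    using r(1) mean by (intro nn_integral_ge_circle_means) auto
  also have "\<dots> = (\<integral>\<^sup>+z. F z * indicator unit_disc z \<partial>lborel)"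
    using r(2) by (intro nn_integral_cong) (auto simp: F_def split: split_indicator)
  finally have plane: "ennreal (pi * r\<^sup>2) * ennreal (\<Psi> (norm (g w)))
      \<le> (\<integral>\<^sup>+z. F z * indicator unit_disc z \<partial>lborel)" .
  have "ennreal (r\<^sup>2 * \<Psi> (norm (g w)))
      = ennreal (1 / pi) * (ennreal (pi * r\<^sup>2) * ennreal (\<Psi> (norm (g w))))"
    using orlicz_nonneg[OF orl] by (simp add: ennreal_mult[symmetric])
  also have "\<dots> \<le> (\<integral>\<^sup>+z. F z \<partial>area_D)"
    unfolding nn_integral_area_D[OF \<open>F \<in> borel_measurable borel\<close>] by (intro mult_left_mono plane) simp
  also have "\<dots> \<le> orlicz_modular \<Psi> f C"
    unfolding orlicz_modular_def using orlicz_nonneg[OF orl]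
    by (intro nn_integral_mono) (auto simp: F_def ng split: split_indicator)
  finally show ?thesis by (simp add: ng)
qed

lemma orlicz_modular_antimono:
  assumes "orlicz \<Psi>" "0 < C'" "C' \<le> C"
  shows "orlicz_modular \<Psi> f C \<le> orlicz_modular \<Psi> f C'"
  unfolding orlicz_modular_def using assms
  by (intro nn_integral_mono ennreal_leI orlicz_mono[OF assms(1)] divide_left_mono) auto

lemma lux_norm_le_1_pointwise:
  assumes orl: "orlicz \<Psi>" and f: "f \<in> bergman_orlicz \<Psi>" "lux_norm \<Psi> f \<le> 1"
    and r: "0 < r" "cball w r \<subseteq> unit_disc"
  shows "r\<^sup>2 * \<Psi> (norm (f w)) \<le> 1"
proof -
  have holo: "f holomorphic_on unit_disc" using f(1) by (simp add: bergman_orlicz_def)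
  have le1: "r\<^sup>2 * \<Psi> (norm (f w) / C) \<le> 1" if "1 < C" for C
  proof -
    have "Inf {C. 0 < C \<and> orlicz_modular \<Psi> f C \<le> 1} < C"
      using f(2) that by (simp add: lux_norm_def)
    then obtain C' where C': "0 < C'" "orlicz_modular \<Psi> f C' \<le> 1" "C' < C"
      using cInf_lessD[of "{C. 0 < C \<and> orlicz_modular \<Psi> f C \<le> 1}"] f(1)
      by (auto simp: bergman_orlicz_def)
    have "ennreal (r\<^sup>2 * \<Psi> (norm (f w) / C)) \<le> orlicz_modular \<Psi> f C"
      using that by (intro orlicz_area_mean_le[OF orl holo r]) simp
    also have "\<dots> \<le> 1"
      using C' orlicz_modular_antimono[OF orl C'(1), of C f] by simp
    finally show ?thesis by (simp add: ennreal_le_1)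
  qed
  have "((\<lambda>C. r\<^sup>2 * \<Psi> (norm (f w) / C)) \<longlongrightarrow> r\<^sup>2 * \<Psi> (norm (f w) / 1)) (at_right 1)"
    by (intro tendsto_mult_left continuous_on_tendsto_compose[OF orlicz_continuous[OF orl]]
        tendsto_intros eventually_at_rightI[of 1 2]) auto
  moreover have "\<forall>\<^sub>F C in at_right 1. r\<^sup>2 * \<Psi> (norm (f w) / C) \<le> 1"
    by (intro eventually_at_rightI[of 1 2]) (auto intro: le1)
  ultimately show ?thesis
    by (intro tendsto_upperbound[of _ _ "at_right (1::real)"]) auto
qed

section \<open>Hastings--Luecking boxes\<close>

definition in_arc :: "nat \<Rightarrow> nat \<Rightarrow> real \<Rightarrow> bool" where
  "in_arc n j \<theta> \<longleftrightarrow> (\<exists>m::int. (2 * real j - 1) * pi / 2 ^ n \<le> \<theta> + 2 * pi * m \<and>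
                                 \<theta> + 2 * pi * m < (2 * real j + 1) * pi / 2 ^ n)"

lemma mem_HL_box:
  "z \<in> HL_box n j \<longleftrightarrow> 1 - 1 / 2 ^ n \<le> norm z \<and> norm z < 1 - 1 / 2 ^ (n + 1) \<and> in_arc n j (Arg z)"
  by (simp add: HL_box_def in_arc_def)

lemma in_arc_iff:
  assumes "j < 2 ^ n"
  shows "in_arc n j \<theta> \<longleftrightarrow> int j = \<lfloor>\<theta> * 2 ^ n / (2 * pi) + 1 / 2\<rfloor> mod 2 ^ n"
proof -
  define u where "u = \<theta> * 2 ^ n / (2 * pi) + 1 / 2"
  have step: "(2 * real j - 1) * pi / 2 ^ n \<le> \<theta> + 2 * pi * m \<and> \<theta> + 2 * pi * m < (2 * real j + 1) * pi / 2 ^ n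
      \<longleftrightarrow> int j = \<lfloor>u\<rfloor> + m * 2 ^ n" for m :: int
  proof -
    have "(2 * real j - 1) * pi / 2 ^ n \<le> \<theta> + 2 * pi * m \<and> \<theta> + 2 * pi * m < (2 * real j + 1) * pi / 2 ^ n
        \<longleftrightarrow> real j \<le> u + of_int (m * 2 ^ n) \<and> u + of_int (m * 2 ^ n) < real j + 1"
      by (simp add: u_def field_simps)
    also have "\<dots> \<longleftrightarrow> \<lfloor>u + of_int (m * 2 ^ n)\<rfloor> = int j"
      by (simp only: floor_eq_iff of_int_of_nat_eq)
    finally show ?thesis by (simp only: floor_add_int eq_commute)
  qed
  have "(\<exists>m::int. int j = \<lfloor>u\<rfloor> + m * 2 ^ n) \<longleftrightarrow> int j = \<lfloor>u\<rfloor> mod 2 ^ n"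
  proof
    assume "\<exists>m::int. int j = \<lfloor>u\<rfloor> + m * 2 ^ n"
    then obtain m :: int where "int j = \<lfloor>u\<rfloor> + m * 2 ^ n" by blast
    then have "int j mod 2 ^ n = \<lfloor>u\<rfloor> mod 2 ^ n" by simp
    moreover have "int j mod 2 ^ n = int j" using assms by (simp add: of_nat_less_iff[symmetric])
    ultimately show "int j = \<lfloor>u\<rfloor> mod 2 ^ n" by simp
  next
    assume "int j = \<lfloor>u\<rfloor> mod 2 ^ n"
    then have "int j = \<lfloor>u\<rfloor> + (- (\<lfloor>u\<rfloor> div 2 ^ n)) * 2 ^ n"
      by (simp add: minus_div_mult_eq_mod[symmetric])
    then show "\<exists>m::int. int j = \<lfloor>u\<rfloor> + m * 2 ^ n" by blast
  qed
  then show ?thesis unfolding in_arc_def step u_def .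
qed

lemma in_arc_unique: "in_arc n j \<theta> \<Longrightarrow> in_arc n j' \<theta> \<Longrightarrow> j < 2 ^ n \<Longrightarrow> j' < 2 ^ n \<Longrightarrow> j = j'"
  by (simp add: in_arc_iff)

lemma in_arc_exists: "\<exists>j < 2 ^ n. in_arc n j \<theta>"
proof -
  define j where "j = nat (\<lfloor>\<theta> * 2 ^ n / (2 * pi) + 1 / 2\<rfloor> mod 2 ^ n)"
  have "int j = \<lfloor>\<theta> * 2 ^ n / (2 * pi) + 1 / 2\<rfloor> mod 2 ^ n" by (simp add: j_def)
  moreover have "j < 2 ^ n" unfolding j_def by (simp add: nat_less_iff)
  ultimately show ?thesis by (auto simp: in_arc_iff)
qed

lemma dyadic_annulus_unique:
  fixes \<rho> :: real
  assumes "1 - 1 / 2 ^ n \<le> \<rho>" "\<rho> < 1 - 1 / 2 ^ (n + 1)"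
    and "1 - 1 / 2 ^ n' \<le> \<rho>" "\<rho> < 1 - 1 / 2 ^ (n' + 1)"
  shows "n = n'"
proof -
  have "n \<le> n'" if "1 - 1 / 2 ^ n \<le> \<rho>" "\<rho> < 1 - 1 / 2 ^ (n' + 1)" for n n' :: nat
  proof (rule ccontr)
    assume "\<not> n \<le> n'"
    then have "(2::real) ^ (n' + 1) \<le> 2 ^ n" by (intro power_increasing) auto
    then have "1 / 2 ^ n \<le> 1 / (2::real) ^ (n' + 1)" by (intro divide_left_mono) auto
    with that show False by linarith
  qed
  with assms show ?thesis by (meson order_antisym)
qed

lemma dyadic_annulus_exists:
  fixes \<rho> :: real
  assumes "0 \<le> \<rho>" "\<rho> < 1"
  shows "\<exists>n. 1 - 1 / 2 ^ n \<le> \<rho> \<and> \<rho> < 1 - 1 / 2 ^ (n + 1)"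
proof -
  have ex: "\<exists>n. \<rho> < 1 - 1 / 2 ^ (n + 1)"
  proof -
    obtain n where "(1 / 2 :: real) ^ n < 1 - \<rho>"
      using real_arch_pow_inv[of "1 - \<rho>" "1 / 2"] assms(2) by auto
    moreover have "1 / 2 ^ (n + 1) \<le> (1 / 2 :: real) ^ n"
      by (simp add: power_one_over divide_le_eq)
    ultimately show ?thesis by (intro exI[of _ n]) linarith
  qed
  define n where "n = (LEAST n. \<rho> < 1 - 1 / 2 ^ (n + 1))"
  have "\<rho> < 1 - 1 / 2 ^ (n + 1)" unfolding n_def by (rule LeastI_ex[OF ex])
  moreover have "1 - 1 / 2 ^ n \<le> \<rho>"
  proof (cases n)
    case (Suc k)
    then have "\<not> \<rho> < 1 - 1 / 2 ^ (k + 1)" unfolding n_def by (intro not_less_Least) simp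
    then show ?thesis using Suc by simp
  qed (use assms in simp)
  ultimately show ?thesis by blast
qed

lemma HL_box_disjoint:
  assumes "z \<in> HL_box n j" "z \<in> HL_box n' j'" "j < 2 ^ n" "j' < 2 ^ n'"
  shows "n = n' \<and> j = j'"
  using assms dyadic_annulus_unique[of n "norm z" n'] in_arc_unique[of n j "Arg z" j']
  by (auto simp: mem_HL_box)

lemma HL_box_cover:
  assumes "norm z < 1"
  shows "\<exists>n j. j < 2 ^ n \<and> z \<in> HL_box n j"
  using dyadic_annulus_exists[OF norm_ge_zero assms] in_arc_exists by (meson mem_HL_box)

lemma HL_box_subset_unit_disc: "HL_box n j \<subseteq> unit_disc"
proof
  fix z assume "z \<in> HL_box n j"
  then have "norm z < 1 - 1 / 2 ^ (n + 1)" by (simp add: mem_HL_box)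
  moreover have "0 < 1 / (2::real) ^ (n + 1)" by simp
  ultimately have "norm z < 1" by linarith
  then show "z \<in> unit_disc" by (simp add: unit_disc_def)
qed

lemma iexp_add_2pi: "iexp (x + 2 * pi * of_int m) = iexp x"
proof -
  have "iexp (x + 2 * pi * of_int m) = exp (\<i> * of_real x + \<i> * (of_int m * (of_real pi * 2)))"
    by (simp add: algebra_simps)
  also have "\<dots> = iexp x" by (rule exp_plus_2pin)
  finally show ?thesis .
qed

lemma iexp_eq_iexp_imp: "iexp a = iexp b \<Longrightarrow> \<exists>m::int. a = b + 2 * pi * m"
proof -
  assume "iexp a = iexp b"
  then obtain n :: int where "\<i> * of_real a = \<i> * of_real b + of_real (real_of_int (2 * n) * pi) * \<i>"
    unfolding exp_eq by blast
  then have "Im (\<i> * of_real a) = Im (\<i> * of_real b + of_real (real_of_int (2 * n) * pi) * \<i>)"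
    by simp
  then have "a = b + 2 * pi * n" by simp
  then show ?thesis by blast
qed

lemma Arg_iexp_mult:
  assumes "w \<noteq> 0"
  obtains m :: int where "Arg (iexp \<phi> * w) = \<phi> + Arg w + 2 * pi * m"
proof -
  have "of_real (norm w) * iexp (Arg (iexp \<phi> * w)) = iexp \<phi> * w"
    using Arg_eq[of "iexp \<phi> * w"] assms by (simp add: norm_mult)
  also have "\<dots> = of_real (norm w) * iexp (\<phi> + Arg w)"
    using Arg_eq[of w] assms by (simp add: exp_add algebra_simps)
  finally have "iexp (Arg (iexp \<phi> * w)) = iexp (\<phi> + Arg w)" using assms by simp
  with iexp_eq_iexp_imp that show ?thesis by (metis add.assoc)
qed

lemma in_arc_add_2pi: "in_arc n j (\<theta> + 2 * pi * m) \<longleftrightarrow> in_arc n j \<theta>" for m :: int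
proof
  assume "in_arc n j (\<theta> + 2 * pi * m)"
  then obtain k :: int where "(2 * real j - 1) * pi / 2 ^ n \<le> \<theta> + 2 * pi * (m + k) \<and>
      \<theta> + 2 * pi * (m + k) < (2 * real j + 1) * pi / 2 ^ n"
    by (auto simp: in_arc_def algebra_simps)
  then show "in_arc n j \<theta>" unfolding in_arc_def by blast
next
  assume "in_arc n j \<theta>"
  then obtain k :: int where "(2 * real j - 1) * pi / 2 ^ n \<le> (\<theta> + 2 * pi * m) + 2 * pi * (k - m) \<and>
      (\<theta> + 2 * pi * m) + 2 * pi * (k - m) < (2 * real j + 1) * pi / 2 ^ n"
    by (auto simp: in_arc_def algebra_simps)
  then show "in_arc n j (\<theta> + 2 * pi * m)" unfolding in_arc_def by blast
qed

definition HL_center :: "nat \<Rightarrow> nat \<Rightarrow> complex" where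
  "HL_center n j = iexp (2 * pi * real j / 2 ^ n)"

lemma norm_HL_center [simp]: "norm (HL_center n j) = 1"
  by (simp add: HL_center_def norm_exp_eq_Re)

lemma HL_box_subset_carleson_window:
  assumes "1 \<le> n"
  shows "HL_box n j \<subseteq> carleson_window (HL_center n j) (1 / 2 ^ n)"
proof
  fix z assume z: "z \<in> HL_box n j"
  define t :: real where "t = 1 / 2 ^ n"
  define \<phi> where "\<phi> = 2 * pi * real j / 2 ^ n"
  obtain m :: int where m: "(2 * real j - 1) * pi / 2 ^ n \<le> Arg z + 2 * pi * m"
    "Arg z + 2 * pi * m < (2 * real j + 1) * pi / 2 ^ n"
    using z by (auto simp: mem_HL_box in_arc_def)
  have "(2::real) \<le> 2 ^ n" using assms by (metis power_one_right power_increasing one_le_numeral)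
  then have t2: "t \<le> 1 / 2" by (simp add: t_def field_simps)
  have r: "1 - t \<le> norm z" "norm z < 1" using z t2 by (auto simp: mem_HL_box t_def)
  have z0: "z \<noteq> 0" using r t2 by auto
  define \<psi> where "\<psi> = - \<phi> + Arg z + 2 * pi * m"
  have "(2 * real j - 1) * pi / 2 ^ n = \<phi> - pi * t" "(2 * real j + 1) * pi / 2 ^ n = \<phi> + pi * t"
    by (simp_all add: \<phi>_def t_def field_simps)
  with m have \<psi>: "- (pi * t) \<le> \<psi>" "\<psi> < pi * t"
    unfolding \<psi>_def by linarith+
  have "pi * t \<le> pi / 2" using t2 by (simp add: field_simps)
  with \<psi> have \<psi>_range: "- pi < \<psi>" "\<psi> \<le> pi" using pi_gt_zero by linarith+
  have "z * cnj (HL_center n j) = of_real (norm z) * iexp (Arg z) * iexp (- \<phi>)"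
    using Arg_eq[OF z0] by (simp add: HL_center_def \<phi>_def exp_cnj)
  also have "\<dots> = of_real (norm z) * iexp (- \<phi> + Arg z + 2 * pi * m)"
    unfolding iexp_add_2pi by (simp add: exp_add[symmetric] algebra_simps)
  finally have "z * cnj (HL_center n j) = of_real (norm z) * iexp \<psi>" by (simp add: \<psi>_def)
  then have "Arg (z * cnj (HL_center n j)) = \<psi>"
    using z0 \<psi>_range by (intro Arg_unique[of "norm z"]) simp_all
  then show "z \<in> carleson_window (HL_center n j) (1 / 2 ^ n)"
    using r \<psi> by (auto simp: carleson_window_def t_def)
qed

text \<open>Rotated copies of this rectangle of area \<open>t\<^sup>2\<close> fit inside the boxes of level \<open>n\<close> when
  \<open>t = 2\<^sup>-\<^sup>n\<close>.\<close>
definition HL_rect :: "real \<Rightarrow> complex set" where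
  "HL_rect t = cbox (Complex (1 - t) (- (3 / 2 * t))) (Complex (1 - 2 / 3 * t) (3 / 2 * t))"

lemma HL_rect_borel [measurable]: "HL_rect t \<in> sets borel"
  by (simp add: HL_rect_def)

lemma emeasure_HL_rect: "0 \<le> t \<Longrightarrow> emeasure lborel (HL_rect t) = ennreal (t\<^sup>2)"
  by (simp add: HL_rect_def emeasure_lborel_cbox_eq Basis_complex_def inner_complex_def
      power2_eq_square field_simps)

lemma HL_rect_bounds:
  assumes t: "0 < t" "t \<le> 1 / 8" and w: "w \<in> HL_rect t"
  shows "1 - t \<le> norm w" "norm w < 1 - t / 2" "\<bar>Arg w\<bar> < pi * t"
proof -
  from w have x: "1 - t \<le> Re w" "Re w \<le> 1 - 2 / 3 * t" and y: "\<bar>Im w\<bar> \<le> 3 / 2 * t"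
    by (auto simp: HL_rect_def in_cbox_complex_iff)
  have x0: "0 < Re w" using x t by linarith
  show "1 - t \<le> norm w" using x abs_Re_le_cmod[of w] by linarith
  have "(Im w)\<^sup>2 \<le> (3 / 2 * t)\<^sup>2"
    using y t by (simp add: abs_le_square_iff[symmetric])
  moreover have "(Re w)\<^sup>2 \<le> (1 - 2 / 3 * t)\<^sup>2"
    using x x0 by (intro power_mono) auto
  ultimately have "(norm w)\<^sup>2 \<le> (1 - 2 / 3 * t)\<^sup>2 + (3 / 2 * t)\<^sup>2"
    unfolding cmod_power2 by linarith
  also have "\<dots> < (1 - t / 2)\<^sup>2"
    using t by (simp add: power2_eq_square algebra_simps)
  finally show "norm w < 1 - t / 2"
    by (rule power_less_imp_less_base) (use t in auto)
  have "\<bar>Im w / Re w\<bar> = \<bar>Im w\<bar> / Re w" using x0 by (simp add: abs_div)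
  also have "\<dots> \<le> (3 / 2 * t) / (1 - t)"
    by (rule frac_le) (use x y t in auto)
  also have "\<dots> \<le> (3 / 2 * t) / (7 / 8)"
    using t by (intro divide_left_mono) auto
  also have "\<dots> < pi * t" using pi_gt3 t by (simp add: field_simps)
  finally show "\<bar>Arg w\<bar> < pi * t"
    using arg_conv_arctan[OF x0] abs_arctan_le[of "Im w / Re w"] by simp
qed

lemma rotate_mem_HL_box:
  assumes "1 \<le> n" "1 - 1 / 2 ^ n \<le> norm w" "norm w < 1 - 1 / 2 ^ (n + 1)" "\<bar>Arg w\<bar> < pi / 2 ^ n"
  shows "HL_center n j * w \<in> HL_box n j"
proof -
  define \<phi> where "\<phi> = 2 * pi * real j / 2 ^ n"
  have "(2::real) \<le> 2 ^ n" using assms(1) by (metis power_one_right power_increasing one_le_numeral)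
  then have "w \<noteq> 0" using assms(2) by (auto simp: field_simps)
  then obtain m :: int where m: "Arg (iexp \<phi> * w) = \<phi> + Arg w + 2 * pi * m"
    by (rule Arg_iexp_mult)
  have "(2 * real j - 1) * pi / 2 ^ n = \<phi> - pi / 2 ^ n" "(2 * real j + 1) * pi / 2 ^ n = \<phi> + pi / 2 ^ n"
    by (simp_all add: \<phi>_def field_simps)
  then have "in_arc n j (\<phi> + Arg w)"
    using assms(4) unfolding in_arc_def by (intro exI[of _ 0]) auto
  then have "in_arc n j (Arg (HL_center n j * w))"
    by (simp add: HL_center_def \<phi>_def[symmetric] m in_arc_add_2pi)
  with assms show ?thesis by (simp add: mem_HL_box norm_mult)
qed

lemma HL_center_rect_subset_HL_box:
  assumes "3 \<le> n"
  shows "(*) (HL_center n j) ` HL_rect (1 / 2 ^ n) \<subseteq> HL_box n j"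
proof clarify
  fix w assume w: "w \<in> HL_rect (1 / 2 ^ n)"
  have "(2::real) ^ 3 \<le> 2 ^ n" using assms by (intro power_increasing) auto
  then have "1 / 2 ^ n \<le> (1 / 8 :: real)" by (simp add: field_simps)
  from HL_rect_bounds[OF _ this w] show "HL_center n j * w \<in> HL_box n j"
    using assms by (intro rotate_mem_HL_box) simp_all
qed

lemma le_pow2_minus_1_iff: "j \<le> 2 ^ n - 1 \<longleftrightarrow> j < (2::nat) ^ n"
  using less_eq_Suc_le[of j "2 ^ n"] by (simp add: Suc_leI le_diff_conv2)

lemma HL_index_exists: "\<exists>n j. j < 2 ^ n \<and> k = 2 ^ n + j - (1::nat)"
proof (induction k)
  case 0
  show ?case by (intro exI[of _ 0]) simp
next
  case (Suc k)
  then obtain n j where nj: "j < 2 ^ n" "k = 2 ^ n + j - 1" by blast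
  show ?case
  proof (cases "Suc j < 2 ^ n")
    case True
    with nj show ?thesis by (intro exI[of _ n] exI[of _ "Suc j"]) simp
  next
    case False
    with nj have "Suc k = 2 ^ Suc n + 0 - 1" by simp
    then show ?thesis by (intro exI[of _ "Suc n"] exI[of _ 0]) simp
  qed
qed

lemma HL_index_unique:
  assumes "j < 2 ^ n" "j' < 2 ^ n'" "2 ^ n + j - 1 = 2 ^ n' + j' - (1::nat)"
  shows "n = n' \<and> j = j'"
proof -
  have "(1::nat) \<le> 2 ^ n" "(1::nat) \<le> 2 ^ n'" by simp_all
  with assms(3) have eq: "2 ^ n + j = 2 ^ n' + j'" by arith
  have le: "n \<le> n'" if "j' < 2 ^ n'" "2 ^ n + j = 2 ^ n' + (j'::nat)" for n n' j j'
  proof (rule ccontr)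
    assume "\<not> n \<le> n'"
    then have "(2::nat) ^ Suc n' \<le> 2 ^ n" by (intro power_increasing) auto
    with that show False by simp
  qed
  have "n = n'" using le[OF assms(2) eq] le[OF assms(1) eq[symmetric]] by simp
  with eq show ?thesis by simp
qed

definition HL_coords :: "nat \<Rightarrow> nat \<times> nat" where
  "HL_coords k = (SOME (n, j). j < 2 ^ n \<and> k = 2 ^ n + j - 1)"

definition HL_level :: "nat \<Rightarrow> nat" where "HL_level k = fst (HL_coords k)"

definition HL_offset :: "nat \<Rightarrow> nat" where "HL_offset k = snd (HL_coords k)"

lemma HL_coords: "HL_offset k < 2 ^ HL_level k" "k = 2 ^ HL_level k + HL_offset k - 1"
proof -
  have "\<exists>p. (case p of (n, j) \<Rightarrow> j < 2 ^ n \<and> k = 2 ^ n + j - 1)"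
    using HL_index_exists[of k] by auto
  from someI_ex[OF this]
  show "HL_offset k < 2 ^ HL_level k" "k = 2 ^ HL_level k + HL_offset k - 1"
    by (auto simp: HL_level_def HL_offset_def HL_coords_def split: prod.splits)
qed

lemma HL_set_eq_HL_box: "HL_set k = HL_box (HL_level k) (HL_offset k)"
proof -
  have "{HL_box n j | n j. j \<le> 2 ^ n - 1 \<and> k = 2 ^ n + j - 1} = {HL_box (HL_level k) (HL_offset k)}"
  proof (intro equalityI subsetI)
    fix X assume "X \<in> {HL_box n j | n j. j \<le> 2 ^ n - 1 \<and> k = 2 ^ n + j - 1}"
    then obtain n j where X: "X = HL_box n j" "j < 2 ^ n" "k = 2 ^ n + j - 1"
      unfolding le_pow2_minus_1_iff by blast
    have "2 ^ n + j - 1 = 2 ^ HL_level k + HL_offset k - 1"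
      by (metis X(3) HL_coords(2))
    with HL_index_unique[OF X(2) HL_coords(1)] X(1)
    show "X \<in> {HL_box (HL_level k) (HL_offset k)}" by simp
  qed (use HL_coords[of k] in \<open>auto simp only: le_pow2_minus_1_iff\<close>)
  then show ?thesis by (simp add: HL_set_def)
qed

lemma disjoint_family_HL_set: "disjoint_family HL_set"
  unfolding disjoint_family_on_def
proof (intro ballI impI)
  fix k k' :: nat assume "k \<noteq> k'"
  show "HL_set k \<inter> HL_set k' = {}"
  proof (rule ccontr)
    assume "HL_set k \<inter> HL_set k' \<noteq> {}"
    then obtain z where "z \<in> HL_box (HL_level k) (HL_offset k)" "z \<in> HL_box (HL_level k') (HL_offset k')"
      by (auto simp: HL_set_eq_HL_box)
    with HL_coords[of k] HL_coords[of k'] HL_box_disjoint have "k = k'" by metis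
    with \<open>k \<noteq> k'\<close> show False ..
  qed
qed

lemma HL_set_cover:
  assumes "norm z < 1"
  obtains k where "z \<in> HL_set k"
proof -
  obtain n j where nj: "j < 2 ^ n" "z \<in> HL_box n j" using HL_box_cover[OF assms] by blast
  then have "z \<in> HL_set (2 ^ n + j - 1)"
    unfolding HL_set_def le_pow2_minus_1_iff by blast
  then show ?thesis by (rule that)
qed

definition HL_sup :: "(complex \<Rightarrow> complex) \<Rightarrow> nat \<Rightarrow> real" where
  "HL_sup f k = (SUP w\<in>HL_set k. norm (f w))"

lemma Lambda_f_eq_HL_sup:
  assumes "z \<in> HL_set k"
  shows "Lambda_f f z = HL_sup f k"
proof -
  have "(\<Sum>k'. (SUP w\<in>HL_set k'. norm (f w)) * indicator (HL_set k') z) =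
        (\<Sum>k'\<in>{k}. (SUP w\<in>HL_set k'. norm (f w)) * indicator (HL_set k') z)"
    using disjoint_family_onD[OF disjoint_family_HL_set] assms
    by (intro suminf_finite) (auto simp: indicator_def)
  then show ?thesis using assms by (simp add: Lambda_f_def HL_sup_def)
qed

lemma borel_measurable_Arg [measurable]: "Arg \<in> borel_measurable borel"
proof -
  have "Arg = (\<lambda>z. if z = 0 then 0 else Im (Ln z))"
    using Arg_of_real[of 0] by (auto simp: Arg_eq_Im_Ln fun_eq_iff)
  also have "\<dots> \<in> borel_measurable borel" by measurable
  finally show ?thesis .
qed

lemma carleson_window_borel [measurable]: "carleson_window \<xi> h \<in> sets borel"
proof -
  have "carleson_window \<xi> h = {z \<in> space borel. norm z < 1 \<and> 1 - h \<le> norm z \<and> \<bar>Arg (z * cnj \<xi>)\<bar> \<le> pi * h}"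
    by (auto simp: carleson_window_def)
  also have "\<dots> \<in> sets borel" by measurable
  finally show ?thesis .
qed

definition HL_window :: "nat \<Rightarrow> complex set" where
  "HL_window k = carleson_window (HL_center (HL_level k) (HL_offset k)) (1 / 2 ^ HL_level k)"

definition HL_inner :: "nat \<Rightarrow> complex set" where
  "HL_inner k = (if 3 \<le> HL_level k
     then (*) (HL_center (HL_level k) (HL_offset k)) ` HL_rect (1 / 2 ^ HL_level k) else {})"

lemma HL_set_subset_HL_window: "1 \<le> HL_level k \<Longrightarrow> HL_set k \<subseteq> HL_window k"
  unfolding HL_set_eq_HL_box HL_window_def by (rule HL_box_subset_carleson_window)

lemma HL_inner_subset_HL_set: "HL_inner k \<subseteq> HL_set k"
  using HL_center_rect_subset_HL_box by (simp add: HL_inner_def HL_set_eq_HL_box)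

lemma HL_inner_subset_unit_disc: "HL_inner k \<subseteq> unit_disc"
  using HL_inner_subset_HL_set[of k] HL_box_subset_unit_disc[of "HL_level k" "HL_offset k"]
  by (simp add: HL_set_eq_HL_box)

lemma HL_inner_borel [measurable]: "HL_inner k \<in> sets borel"
proof -
  have "(*) \<omega> ` HL_rect t \<in> sets borel" for \<omega> t
    unfolding HL_rect_def
    by (intro borel_closed compact_imp_closed compact_continuous_image continuous_intros compact_cbox)
  then show ?thesis by (simp add: HL_inner_def)
qed

lemma HL_inner_sets_area_D: "HL_inner k \<in> sets area_D"
  by (intro sets_area_D HL_inner_borel HL_inner_subset_unit_disc)

lemma emeasure_HL_inner:
  assumes "3 \<le> HL_level k"
  shows "emeasure area_D (HL_inner k) = ennreal ((1 / 2 ^ HL_level k)\<^sup>2 / pi)"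
proof -
  have "emeasure area_D (HL_inner k) = ennreal (1 / pi) * emeasure lborel (HL_inner k)"
    by (intro emeasure_area_D HL_inner_borel HL_inner_subset_unit_disc)
  also have "emeasure lborel (HL_inner k) = ennreal ((1 / 2 ^ HL_level k)\<^sup>2)"
    using assms by (simp add: HL_inner_def emeasure_lborel_rotate_image emeasure_HL_rect)
  finally show ?thesis by (simp add: ennreal_mult[symmetric])
qed

lemma carleson_window_in_sets:
  assumes "sets \<mu> = sets (restrict_space borel unit_disc)"
  shows "carleson_window \<xi> h \<in> sets \<mu>"
proof -
  have "carleson_window \<xi> h \<subseteq> unit_disc" by (auto simp: carleson_window_def unit_disc_def)
  then show ?thesis by (simp add: assms sets_restrict_space_iff)
qed

lemma disjoint_family_HL_inner: "disjoint_family HL_inner"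
  using disjoint_family_HL_set HL_inner_subset_HL_set
  unfolding disjoint_family_on_def by (metis disjoint_iff subsetD)

section \<open>The Carleson estimate\<close>

lemma orlicz_HL_box_le:
  assumes "orlicz \<Psi>" "f \<in> bergman_orlicz \<Psi>" "lux_norm \<Psi> f \<le> 1" and w: "w \<in> HL_box n j"
  shows "(1 / 2 ^ n)\<^sup>2 * \<Psi> (norm (f w)) \<le> 4"
proof -
  define r :: real where "r = 1 / 2 ^ (n + 1)"
  have "cball w r \<subseteq> unit_disc"
  proof
    fix u assume "u \<in> cball w r"
    then have "norm u \<le> norm w + r"
      using norm_triangle_ineq2[of u w] by (simp add: dist_norm norm_minus_commute)
    then show "u \<in> unit_disc" using w by (simp add: mem_HL_box r_def unit_disc_def)
  qed
  then have "r\<^sup>2 * \<Psi> (norm (f w)) \<le> 1"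
    using assms by (intro lux_norm_le_1_pointwise) (simp_all add: r_def)
  then show ?thesis by (simp add: r_def power2_eq_square field_simps)
qed

lemma HL_sup_bounds:
  assumes orl: "orlicz \<Psi>" and f: "f \<in> bergman_orlicz \<Psi>" "lux_norm \<Psi> f \<le> 1" and z: "z \<in> HL_set k"
  shows "norm (f z) \<le> HL_sup f k"
    and "(1 / 2 ^ HL_level k)\<^sup>2 * \<Psi> (HL_sup f k) \<le> 4"
proof -
  define t :: real where "t = 1 / 2 ^ HL_level k"
  have t: "0 < t" by (simp add: t_def)
  have bound: "norm (f w) \<le> orlicz_inv \<Psi> (4 / t\<^sup>2)" if "w \<in> HL_set k" for w
    using orlicz_HL_box_le[OF orl f, of w] that t orlicz_le_inv_iff[OF orl, of "norm (f w)" "4 / t\<^sup>2"]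
    by (simp add: HL_set_eq_HL_box t_def field_simps)
  have bdd: "bdd_above ((\<lambda>w. norm (f w)) ` HL_set k)"
    using bound by (intro bdd_aboveI2) auto
  have le: "HL_sup f k \<le> orlicz_inv \<Psi> (4 / t\<^sup>2)"
    unfolding HL_sup_def using z bound by (intro cSUP_least) auto
  show sup: "norm (f z) \<le> HL_sup f k"
    unfolding HL_sup_def using z bdd by (rule cSUP_upper)
  have "\<Psi> (HL_sup f k) \<le> 4 / t\<^sup>2"
    using le orlicz_le_inv_iff[OF orl] order_trans[OF norm_ge_zero sup] t by simp
  then show "t\<^sup>2 * \<Psi> (HL_sup f k) \<le> 4"
    using t by (simp add: field_simps)
qed

lemma orlicz_HL_sup_large:
  assumes o1: "orlicz \<Psi>1" and f: "f \<in> bergman_orlicz \<Psi>1" "lux_norm \<Psi>1 f \<le> 1"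
    and z: "z \<in> HL_set k" "8 * orlicz_inv \<Psi>1 (4 / hA\<^sup>2) < norm (f z)"
  shows "0 < HL_sup f k" "32 / hA\<^sup>2 < \<Psi>1 (HL_sup f k)"
proof -
  define y where "y = orlicz_inv \<Psi>1 (4 / hA\<^sup>2)"
  have y: "0 \<le> y" "\<Psi>1 y = 4 / hA\<^sup>2"
    using orlicz_inv_nonneg[OF o1] orlicz_orlicz_inv[OF o1] by (simp_all add: y_def)
  have "8 * y < HL_sup f k" using z(2) HL_sup_bounds(1)[OF o1 f z(1)] by (simp add: y_def)
  then show "0 < HL_sup f k" using y by simp
  have "32 / hA\<^sup>2 \<le> \<Psi>1 (8 * y)"
    using orlicz_mult_le[OF o1, of "1 / 8" "8 * y"] y by simp
  also have "\<dots> < \<Psi>1 (HL_sup f k)" using orlicz_less[OF o1 _ \<open>8 * y < HL_sup f k\<close>] y by simp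
  finally show "32 / hA\<^sup>2 < \<Psi>1 (HL_sup f k)" .
qed

lemma level_ge_3:
  fixes P hA :: real
  assumes hA: "0 < hA" "hA \<le> 1 / 2" and large: "32 / hA\<^sup>2 < P" and small: "(1 / 2 ^ n)\<^sup>2 * P \<le> 4"
  shows "3 \<le> n"
proof -
  define t :: real where "t = 1 / 2 ^ n"
  have small: "t\<^sup>2 * P \<le> 4" using small by (simp only: t_def)
  have "128 \<le> 32 / hA\<^sup>2"
    using hA power_mono[OF hA(2), of 2] by (simp add: field_simps)
  with large have "t\<^sup>2 * 128 < t\<^sup>2 * P" by (intro mult_strict_left_mono) (auto simp: t_def)
  with small have "t\<^sup>2 < (1 / 4)\<^sup>2" by (simp add: power2_eq_square)
  then have "t < 1 / 4" by (rule power_less_imp_less_base) simp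
  then have "(2::real) ^ 2 < 2 ^ n" by (simp add: t_def field_simps)
  then show "3 \<le> n" using power_strict_increasing_iff[of "2::real" 2 n] by simp
qed

lemma nn_integral_set_le_suminf:
  fixes g :: "'a \<Rightarrow> ennreal" and c :: ennreal and a :: "nat \<Rightarrow> ennreal"
  assumes E: "E \<in> sets M" and W: "\<And>k. W k \<in> sets M"
    and le: "\<And>z. z \<in> space M \<Longrightarrow> z \<in> E \<Longrightarrow> g z \<le> c + (\<Sum>k. a k * indicator (W k) z)"
  shows "(\<integral>\<^sup>+z\<in>E. g z \<partial>M) \<le> emeasure M E * c + (\<Sum>k. a k * emeasure M (W k))"
proof -
  have "(\<integral>\<^sup>+z\<in>E. g z \<partial>M) \<le> (\<integral>\<^sup>+z. c * indicator E z + (\<Sum>k. a k * indicator (W k) z) \<partial>M)"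
    using le by (intro nn_integral_mono) (auto split: split_indicator)
  also have "\<dots> = c * emeasure M E + (\<Sum>k. \<integral>\<^sup>+z. a k * indicator (W k) z \<partial>M)"
    using E W by (simp add: nn_integral_add nn_integral_suminf nn_integral_cmult_indicator)
  also have "\<dots> = emeasure M E * c + (\<Sum>k. a k * emeasure M (W k))"
    using W by (simp add: nn_integral_cmult_indicator mult.commute)
  finally show ?thesis .
qed

lemma suminf_emeasure_le_nn_integral:
  fixes c :: "nat \<Rightarrow> ennreal"
  assumes disj: "disjoint_family R" and R: "\<And>k. R k \<in> sets M"
    and le: "\<And>k z. z \<in> R k \<Longrightarrow> c k \<le> g z"
  shows "(\<Sum>k. c k * emeasure M (R k)) \<le> (\<integral>\<^sup>+z. g z \<partial>M)"
proof -
  have "(\<Sum>k. c k * emeasure M (R k)) = (\<integral>\<^sup>+z. (\<Sum>k. c k * indicator (R k) z) \<partial>M)"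
    using R by (simp add: nn_integral_suminf nn_integral_cmult_indicator)
  also have "\<dots> \<le> (\<integral>\<^sup>+z. g z \<partial>M)"
  proof (rule nn_integral_mono)
    fix z
    show "(\<Sum>k. c k * indicator (R k) z) \<le> g z"
    proof (cases "\<exists>k. z \<in> R k")
      case True
      then obtain k where z: "z \<in> R k" by blast
      have "(\<Sum>k'. c k' * indicator (R k') z) = (\<Sum>k'\<in>{k}. c k' * indicator (R k') z)"
        using disjoint_family_onD[OF disj] z by (intro suminf_finite) (auto simp: indicator_def)
      with z le show ?thesis by simp
    qed simp
  qed
  finally show ?thesis .
qed

locale orlicz_carleson =
  fixes \<mu> :: "complex measure" and \<Psi>1 \<Psi>2 :: "real \<Rightarrow> real" and A hA :: real
  assumes sets_\<mu>: "sets \<mu> = sets (restrict_space borel unit_disc)"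
    and fin: "finite_measure \<mu>" and o1: "orlicz \<Psi>1" and o2: "orlicz \<Psi>2"
    and A: "0 < A" and hA: "0 < hA" "hA \<le> 1 / 2"
    and K: "\<forall>h. 0 < h \<and> h < hA \<longrightarrow>
              K_mu2 \<mu> h \<le> ereal ((1 / h\<^sup>2) / \<Psi>2 (A * orlicz_inv \<Psi>1 (1 / h\<^sup>2)))"
begin

definition x_A :: real where
  "x_A = (A / 8) * orlicz_inv \<Psi>1 (4 / hA\<^sup>2)"

definition large :: "(complex \<Rightarrow> complex) \<Rightarrow> nat \<Rightarrow> bool" where
  "large f k \<longleftrightarrow> (\<exists>z\<in>HL_set k. x_A < A * norm (f z) / 64)"

definition window_weight :: "(complex \<Rightarrow> complex) \<Rightarrow> nat \<Rightarrow> ennreal" where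
  "window_weight f k = (if large f k then ennreal (\<Psi>2 (A * HL_sup f k / 64)) else 0)"

text \<open>The Carleson hypothesis is applied at the scale \<open>h = \<surd>(32 / \<Psi>\<^sub>1 s)\<close>, which
  lies between \<open>t\<close> and \<open>h\<^sub>A\<close>.\<close>
lemma carleson_window_estimate:
  assumes \<xi>: "norm \<xi> = 1" and t: "0 < t" and s: "0 < s"
    and large: "32 / hA\<^sup>2 < \<Psi>1 s" and small: "t\<^sup>2 * \<Psi>1 s \<le> 4"
  shows "measure \<mu> (carleson_window \<xi> t) * \<Psi>2 (A * s / 64) \<le> t\<^sup>2 * \<Psi>1 s / 32"
proof -
  define P where "P = \<Psi>1 s"
  have P0: "0 < P" using orlicz_pos[OF o1 s] by (simp add: P_def)
  define h where "h = sqrt (32 / P)"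
  have h0: "0 < h" and h2: "h\<^sup>2 = 32 / P" using P0 by (simp_all add: h_def)
  have "h\<^sup>2 < hA\<^sup>2" using large P0 hA(1) unfolding h2 P_def by (simp add: field_simps)
  then have "h < hA" using h0 hA(1) by (simp add: power_less_imp_less_base)
  have "t\<^sup>2 < h\<^sup>2" using small P0 unfolding h2 P_def by (simp add: field_simps)
  then have "t < h" using t h0 by (simp add: power_less_imp_less_base)
  define Q where "Q = \<Psi>2 (A * orlicz_inv \<Psi>1 (P / 32))"
  have "\<Psi>1 (s / 64) \<le> P / 32"
    using orlicz_mult_le[OF o1, of "1 / 64" s] s P0 by (simp add: P_def)
  then have "s / 64 \<le> orlicz_inv \<Psi>1 (P / 32)"
    using orlicz_le_inv_iff[OF o1, of "s / 64" "P / 32"] s P0 by simp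
  then have Q: "\<Psi>2 (A * s / 64) \<le> Q" "0 < Q"
    unfolding Q_def using A s by (auto intro!: orlicz_mono[OF o2] orlicz_pos[OF o2])
  define \<rho> where "\<rho> = rho_mu \<mu> t"
  have "ereal (\<rho> / t\<^sup>2) \<le> K_mu2 \<mu> h"
    unfolding K_mu2_def \<rho>_def using t \<open>t < h\<close> by (intro SUP_upper) simp
  also have "\<dots> \<le> ereal ((1 / h\<^sup>2) / \<Psi>2 (A * orlicz_inv \<Psi>1 (1 / h\<^sup>2)))"
    using K h0 \<open>h < hA\<close> by blast
  also have "1 / h\<^sup>2 = P / 32" using h2 P0 by simp
  also have "ereal ((P / 32) / \<Psi>2 (A * orlicz_inv \<Psi>1 (P / 32))) = ereal ((P / 32) / Q)"
    by (simp add: Q_def)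
  finally have "\<rho> \<le> t\<^sup>2 * (P / 32) / Q" using t by (simp add: field_simps)
  moreover have "measure \<mu> (carleson_window \<xi> t) \<le> \<rho>"
    unfolding \<rho>_def rho_mu_def using \<xi> finite_measure.bounded_measure[OF fin]
    by (intro cSUP_upper bdd_aboveI2) auto
  ultimately have "measure \<mu> (carleson_window \<xi> t) * \<Psi>2 (A * s / 64) \<le> t\<^sup>2 * (P / 32) / Q * Q"
    using Q orlicz_nonneg[OF o2, of "A * s / 64"] A s P0
    by (intro mult_mono) auto
  then show ?thesis using Q by (simp add: P_def)
qed

lemma HL_set_carleson_estimate:
  assumes f: "f \<in> bergman_orlicz \<Psi>1" "lux_norm \<Psi>1 f \<le> 1" and "large f k"
  shows "3 \<le> HL_level k"
    and "window_weight f k * emeasure \<mu> (HL_window k)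
      \<le> ennreal (1 / 8) * (ennreal (\<Psi>1 (HL_sup f k)) * emeasure area_D (HL_inner k))"
proof -
  obtain z where z: "z \<in> HL_set k" "x_A < A * norm (f z) / 64"
    using \<open>large f k\<close> by (auto simp: large_def)
  define s where "s = HL_sup f k"
  define t :: real where "t = 1 / 2 ^ HL_level k"
  have t: "0 < t" by (simp add: t_def)
  have small: "t\<^sup>2 * \<Psi>1 s \<le> 4"
    using HL_sup_bounds(2)[OF o1 f z(1)] by (simp add: s_def t_def)
  have "8 * orlicz_inv \<Psi>1 (4 / hA\<^sup>2) < norm (f z)" using z(2) A by (simp add: x_A_def field_simps)
  from orlicz_HL_sup_large[OF o1 f z(1) this]
  have s: "0 < s" and large: "32 / hA\<^sup>2 < \<Psi>1 s" by (simp_all add: s_def)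
  show "3 \<le> HL_level k" using level_ge_3[OF hA large] small by (simp add: t_def)
  have "window_weight f k * emeasure \<mu> (HL_window k)
      = ennreal (measure \<mu> (HL_window k) * \<Psi>2 (A * s / 64))"
    using orlicz_nonneg[OF o2, of "A * s / 64"] A s \<open>large f k\<close>
    by (simp add: window_weight_def s_def finite_measure.emeasure_eq_measure[OF fin] ennreal_mult mult.commute)
  also have "\<dots> \<le> ennreal (t\<^sup>2 * \<Psi>1 s / 32)"
    unfolding HL_window_def t_def[symmetric]
    by (intro ennreal_leI carleson_window_estimate[OF _ t s large small]) simp
  also have "\<dots> \<le> ennreal (1 / 8 * (\<Psi>1 s * (t\<^sup>2 / pi)))"
  proof (rule ennreal_leI)
    have "pi * (t\<^sup>2 * \<Psi>1 s) \<le> 4 * (t\<^sup>2 * \<Psi>1 s)"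
      using pi_less_4 orlicz_nonneg[OF o1, of s] s by (intro mult_right_mono) auto
    then show "t\<^sup>2 * \<Psi>1 s / 32 \<le> 1 / 8 * (\<Psi>1 s * (t\<^sup>2 / pi))"
      by (simp add: field_simps)
  qed
  also have "\<dots> = ennreal (1 / 8) * (ennreal (\<Psi>1 s) * ennreal (t\<^sup>2 / pi))"
  proof -
    have "0 \<le> \<Psi>1 s" "(0::real) \<le> 1 / 8" using orlicz_nonneg[OF o1, of s] s by simp_all
    then show ?thesis by (simp only: ennreal_mult mult_nonneg_nonneg divide_nonneg_nonneg
        zero_le_power2 pi_ge_zero)
  qed
  also have "ennreal (t\<^sup>2 / pi) = emeasure area_D (HL_inner k)"
    using emeasure_HL_inner level_ge_3[OF hA large] small by (simp add: t_def)
  finally show "window_weight f k * emeasure \<mu> (HL_window k)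
      \<le> ennreal (1 / 8) * (ennreal (\<Psi>1 (HL_sup f k)) * emeasure area_D (HL_inner k))"
    by (simp add: s_def)
qed

lemma orlicz_pointwise_le_suminf:
  assumes f: "f \<in> bergman_orlicz \<Psi>1" "lux_norm \<Psi>1 f \<le> 1" and z: "norm z < 1"
  shows "ennreal (\<Psi>2 (A * norm (f z) / 64))
    \<le> ennreal (\<Psi>2 x_A) + (\<Sum>k. window_weight f k * indicator (HL_window k) z)"
proof (cases "A * norm (f z) / 64 \<le> x_A")
  case True
  then show ?thesis
    using A by (intro add_increasing2 ennreal_leI orlicz_mono[OF o2]) auto
next
  case False
  obtain k where k: "z \<in> HL_set k" using HL_set_cover[OF z] .
  with False have "large f k" unfolding large_def by (intro bexI[of _ z]) auto
  then have "1 \<le> HL_level k" using HL_set_carleson_estimate(1)[OF f] by fastforce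
  with k HL_set_subset_HL_window have "z \<in> HL_window k" by blast
  have "\<Psi>2 (A * norm (f z) / 64) \<le> \<Psi>2 (A * HL_sup f k / 64)"
    using HL_sup_bounds(1)[OF o1 f k] A by (intro orlicz_mono[OF o2]) auto
  then have "ennreal (\<Psi>2 (A * norm (f z) / 64)) \<le> window_weight f k * indicator (HL_window k) z"
    using \<open>z \<in> HL_window k\<close> \<open>large f k\<close> by (simp add: window_weight_def ennreal_leI)
  also have "\<dots> \<le> (\<Sum>k. window_weight f k * indicator (HL_window k) z)"
    using ennreal_suminf_lessD[of "\<lambda>k. window_weight f k * indicator (HL_window k) z" _ k]
    by (meson not_le less_irrefl)
  finally show ?thesis by (simp add: add_increasing)
qed

lemma nn_integral_le_windows:
  assumes f: "f \<in> bergman_orlicz \<Psi>1" "lux_norm \<Psi>1 f \<le> 1" and E: "E \<in> sets \<mu>"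
  shows "(\<integral>\<^sup>+z\<in>E. ennreal (\<Psi>2 (A * norm (f z) / 64)) \<partial>\<mu>)
    \<le> emeasure \<mu> E * ennreal (\<Psi>2 x_A) + (\<Sum>k. window_weight f k * emeasure \<mu> (HL_window k))"
proof (rule nn_integral_set_le_suminf[OF E])
  show "HL_window k \<in> sets \<mu>" for k
    unfolding HL_window_def by (rule carleson_window_in_sets[OF sets_\<mu>])
  fix z assume "z \<in> space \<mu>"
  then have "norm z < 1" using sets_eq_imp_space_eq[OF sets_\<mu>] by (simp add: unit_disc_def)
  then show "ennreal (\<Psi>2 (A * norm (f z) / 64))
      \<le> ennreal (\<Psi>2 x_A) + (\<Sum>k. window_weight f k * indicator (HL_window k) z)"
    by (rule orlicz_pointwise_le_suminf[OF f])
qed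

lemma windows_le_nn_integral_Lambda_f:
  assumes f: "f \<in> bergman_orlicz \<Psi>1" "lux_norm \<Psi>1 f \<le> 1"
  shows "(\<Sum>k. window_weight f k * emeasure \<mu> (HL_window k))
    \<le> ennreal (1 / 8) * (\<integral>\<^sup>+z. ennreal (\<Psi>1 (Lambda_f f z)) \<partial>area_D)"
proof -
  define c where "c k = (if large f k then ennreal (\<Psi>1 (HL_sup f k)) else 0)" for k
  have "(\<Sum>k. window_weight f k * emeasure \<mu> (HL_window k))
      \<le> (\<Sum>k. ennreal (1 / 8) * (c k * emeasure area_D (HL_inner k)))"
    using HL_set_carleson_estimate(2)[OF f]
    by (intro suminf_le summableI) (simp add: c_def window_weight_def)
  also have "\<dots> \<le> ennreal (1 / 8) * (\<integral>\<^sup>+z. ennreal (\<Psi>1 (Lambda_f f z)) \<partial>area_D)"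
    unfolding ennreal_suminf_cmult
  proof (intro mult_left_mono suminf_emeasure_le_nn_integral HL_inner_sets_area_D disjoint_family_HL_inner)
    fix k z assume "z \<in> HL_inner k"
    then have "Lambda_f f z = HL_sup f k" using HL_inner_subset_HL_set Lambda_f_eq_HL_sup by blast
    then show "c k \<le> ennreal (\<Psi>1 (Lambda_f f z))" by (simp add: c_def)
  qed simp
  finally show ?thesis .
qed

end

theorem lemma2p4:
  fixes \<mu> :: "complex measure" and \<Psi>1 \<Psi>2 :: "real \<Rightarrow> real" and A hA :: real
  assumes "sets \<mu> = sets (restrict_space borel unit_disc)"
    and "finite_measure \<mu>"
    and "orlicz \<Psi>1" and "orlicz \<Psi>2"
    and "A > 0" and "0 < hA" and "hA \<le> 1/2"
    and "\<forall>h. 0 < h \<and> h < hA \<longrightarrow>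
           K_mu2 \<mu> h \<le> ereal ((1 / h\<^sup>2) / \<Psi>2 (A * orlicz_inv \<Psi>1 (1 / h\<^sup>2)))"
  shows "\<forall>f \<in> bergman_orlicz \<Psi>1. lux_norm \<Psi>1 f \<le> 1 \<longrightarrow>
           (\<forall>E \<in> sets \<mu>.
              (\<integral>\<^sup>+ z\<in>E. ennreal (\<Psi>2 (A * norm (f z) / 64)) \<partial>\<mu>)
                \<le> emeasure \<mu> E * ennreal (\<Psi>2 ((A / 8) * orlicz_inv \<Psi>1 (4 / hA\<^sup>2)))
                  + ennreal (1/8) * (\<integral>\<^sup>+ z. ennreal (\<Psi>1 (Lambda_f f z)) \<partial>area_D))"
proof (intro ballI impI)
  interpret orlicz_carleson \<mu> \<Psi>1 \<Psi>2 A hA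
    by (rule orlicz_carleson.intro) (fact assms)+
  fix f E assume f: "f \<in> bergman_orlicz \<Psi>1" "lux_norm \<Psi>1 f \<le> 1" and E: "E \<in> sets \<mu>"
  from nn_integral_le_windows[OF f E] windows_le_nn_integral_Lambda_f[OF f]
  show "(\<integral>\<^sup>+ z\<in>E. ennreal (\<Psi>2 (A * norm (f z) / 64)) \<partial>\<mu>)
      \<le> emeasure \<mu> E * ennreal (\<Psi>2 ((A / 8) * orlicz_inv \<Psi>1 (4 / hA\<^sup>2)))
        + ennreal (1/8) * (\<integral>\<^sup>+ z. ennreal (\<Psi>1 (Lambda_f f z)) \<partial>area_D)"
    unfolding x_A_def by (meson add_left_mono order_trans)
qed

end
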